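(* Assume the following: - $g$ is a concave distortion function satisfying (A1) and (A2); - $F$ is a distribution function on $\mathbb R$ with mean $0$ and variance $1$; - $\mathcal P\subset\mathbb R^n$ is a polyhedral set such that $\sigma_{\boldsymbol x}>0$ for all $\boldsymbol x\in\mathcal P$; - to each $\boldsymbol x\in\mathcal P$ is associated a tolerance $\varepsilon_{\boldsymbol x}>0$. Let $V=\operatorname{var}(\gamma(U))$, $c_0=\operatorname{corr}(F^{-1}(U),\gamma(U))$ and $\underline{\varepsilon_{\boldsymbol x}}=\min\{\varepsilon_{\boldsymbol x},2\sigma_{\boldsymbol x}^2(1-c_0)\}$. Then for every $\boldsymbol x\in\mathcal P$, $$\sup_{G_{\boldsymbol R}\in\mathcal M(\boldsymbol\mu,\Sigma):\ d_W(F_{\boldsymbol x},G_{\boldsymbol x})\le\sqrt{\varepsilon_{\boldsymbol x}}}H_g(G_{\boldsymbol x})=-\mu_{\boldsymbol x}+\Big(\sigma_{\boldsymbol x}-\frac{\underline{\varepsilon_{\boldsymbol x}}}{2\sigma_{\boldsymbol x}}\Big)\sqrt V c_0+\sqrt{\underline{\varepsilon_{\boldsymbol x}}-\frac{\underline{\varepsilon_{\boldsymbol x}}^2}{4\sigma_{\boldsymbol x}^2}}\,\sqrt{V(1-c_0^2)}.$$ Consequently, the robust portfolio problem $$\min_{\boldsymbol x\in\mathcal P}\ \sup_{G_{\boldsymbol R}\in\mathcal M(\boldsymbol\mu,\Sigma):\ d_W(F_{\boldsymbol x},G_{\boldsymbol x})\le\sqrt{\varepsilon_{\boldsymbol x}}}H_g(G_{\boldsymbol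 x})$$ is equivalent to minimising the right-hand side over $\boldsymbol x\in\mathcal P$.
   Context: Let $(\Omega,\mathcal A,\mathbb P)$ be an atomless probability space and $U\sim\mathcal U(0,1)$. For a distribution function $G$ on $\mathbb R$ with finite second moment, $G^{-1}(u)=\inf\{y:G(y)\ge u\}$. A distortion function is a non-decreasing $g:[0,1]\to[0,1]$ with $g(0)=0$, $g(1)=1$. For absolutely continuous $g$, $\gamma(u)=\partial_-g(x)|_{x=1-u}$ (left derivative), and $H_g(G)=\int_0^1\gamma G^{-1}$. Standing assumptions: - (A1) $g$ is absolutely continuous and $\int_0^1\gamma^2<\infty$; - (A2) $\gamma$ is not a.e. equal to $1$. $d_W(G_1,G_2)=\big(\int_0^1(G_1^{-1}-G_2^{-1})^2\big)^{1/2}$. Portfolio setting: - $\boldsymbol R=(R_1,\dots,R_n)$ is a random vector of returns with multivariate distribution $G_{\boldsymbol R}$. - $\mathcal M(\boldsymbol\mu,\Sigma)$ is the set of all $n$-dimensional distributions with mean vector $\boldsymbol\mu$ and covariance matrix $\Sigma$. - For $\boldsymbol x\in\mathcal P$, $G_{\boldsymbol x}$ is the distribution function of the loss $-\boldsymbol x^\top\boldsymbol R$ under $G_{\boldsymbol R}$. - $\mu_{\boldsymbol x}=\boldsymbol x^\top\boldsymbol\mu$ and $\sigma_{\boldsymbol x}^2=\boldsymbol x^\top\Sigma\boldsymbol x$. - The reference loss distribution $F_{\boldsymbol x}$ has quantile function $F_{\boldsymbol x}^{-1}(u)=-\mu_{\boldsymbol x}+\sigma_{\boldsymbol x}F^{-1}(u)$.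 *)

theory Defs
  imports "HOL-Analysis.Analysis" "HOL-Probability.Probability"
begin

definition quantile :: "(real \<Rightarrow> real) \<Rightarrow> real \<Rightarrow> real" where
  "quantile G u = Inf {y. u \<le> G y}"

definition distortion :: "(real \<Rightarrow> real) \<Rightarrow> bool" where
  "distortion g \<longleftrightarrow> mono_on {0..1} g \<and> g ` {0..1} \<subseteq> {0..1} \<and> g 0 = 0 \<and> g 1 = 1"

definition abs_cont_01 :: "(real \<Rightarrow> real) \<Rightarrow> bool" where
  "abs_cont_01 g \<longleftrightarrow> (\<forall>e>0. \<exists>d>0. \<forall>(n::nat) (a::nat \<Rightarrow> real) (b::nat \<Rightarrow> real).
      (\<forall>k<n. 0 \<le> a k \<and> a k \<le> b k \<and> b k \<le> 1) \<and>
      (\<forall>k<n. \<forall>l<n. k \<noteq> l \<longrightarrow> b k \<le> a l \<or> b l \<le> a k) \<and>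
      (\<Sum>k<n. b k - a k) < d \<longrightarrow> (\<Sum>k<n. \<bar>g (b k) - g (a k)\<bar>) < e)"

definition left_deriv :: "(real \<Rightarrow> real) \<Rightarrow> real \<Rightarrow> real" where
  "left_deriv g x = Lim (at_left x) (\<lambda>t. (g x - g t) / (x - t))"

definition gam :: "(real \<Rightarrow> real) \<Rightarrow> real \<Rightarrow> real" where
  "gam g u = left_deriv g (1 - u)"

definition A1 :: "(real \<Rightarrow> real) \<Rightarrow> bool" where
  "A1 g \<longleftrightarrow> abs_cont_01 g \<and> set_integrable lborel {0<..<1} (\<lambda>u. (gam g u)\<^sup>2)"

definition A2 :: "(real \<Rightarrow> real) \<Rightarrow> bool" where
  "A2 g \<longleftrightarrow> \<not> (AE u in lborel. u \<in> {0<..<1} \<longrightarrow> gam g u = 1)"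

definition Hg :: "(real \<Rightarrow> real) \<Rightarrow> (real \<Rightarrow> real) \<Rightarrow> real" where
  "Hg g G = (LINT u:{0<..<1}|lborel. gam g u * quantile G u)"

definition dWq :: "(real \<Rightarrow> real) \<Rightarrow> (real \<Rightarrow> real) \<Rightarrow> real" where
  "dWq q1 q2 = sqrt (LINT u:{0<..<1}|lborel. (q1 u - q2 u)\<^sup>2)"

definition dW :: "(real \<Rightarrow> real) \<Rightarrow> (real \<Rightarrow> real) \<Rightarrow> real" where
  "dW G1 G2 = dWq (quantile G1) (quantile G2)"

text \<open>Variance / covariance / correlation of f(U), h(U) for U uniform on (0,1).\<close>
definition var01 :: "(real \<Rightarrow> real) \<Rightarrow> real" where
  "var01 f = (LINT u:{0<..<1}|lborel. (f u)\<^sup>2) - (LINT u:{0<..<1}|lborel. f u)\<^sup>2"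

definition cov01 :: "(real \<Rightarrow> real) \<Rightarrow> (real \<Rightarrow> real) \<Rightarrow> real" where
  "cov01 f h = (LINT u:{0<..<1}|lborel. f u * h u)
      - (LINT u:{0<..<1}|lborel. f u) * (LINT u:{0<..<1}|lborel. h u)"

definition corr01 :: "(real \<Rightarrow> real) \<Rightarrow> (real \<Rightarrow> real) \<Rightarrow> real" where
  "corr01 f h = cov01 f h / (sqrt (var01 f) * sqrt (var01 h))"

definition Mset :: "real^'n \<Rightarrow> real^'n^'n \<Rightarrow> (real^'n) measure set" where
  "Mset mu Sig = {M. prob_space M \<and> sets M = sets borel \<and>
      (\<forall>i. integrable M (\<lambda>r. (r $ i)\<^sup>2)) \<and>
      (\<forall>i. (\<integral>r. r $ i \<partial>M) = mu $ i) \<and>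
      (\<forall>i j. (\<integral>r. (r $ i - mu $ i) * (r $ j - mu $ j) \<partial>M) = Sig $ i $ j)}"

definition loss_cdf :: "(real^'n) measure \<Rightarrow> real^'n \<Rightarrow> real \<Rightarrow> real" where
  "loss_cdf GR x = cdf (distr GR borel (\<lambda>r. - (x \<bullet> r)))"

definition mu_x :: "real^'n \<Rightarrow> real^'n \<Rightarrow> real" where
  "mu_x mu x = x \<bullet> mu"

definition sigma_x :: "real^'n^'n \<Rightarrow> real^'n \<Rightarrow> real" where
  "sigma_x Sig x = sqrt (x \<bullet> (Sig *v x))"

definition ref_quantile :: "real measure \<Rightarrow> real^'n \<Rightarrow> real^'n^'n \<Rightarrow> real^'n \<Rightarrow> real \<Rightarrow> real" where
  "ref_quantile MF mu Sig x u = - mu_x mu x + sigma_x Sig x * quantile (cdf MF) u"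

definition robust_risk ::
  "(real \<Rightarrow> real) \<Rightarrow> real measure \<Rightarrow> real^'n \<Rightarrow> real^'n^'n \<Rightarrow> real \<Rightarrow> real^'n \<Rightarrow> ereal" where
  "robust_risk g MF mu Sig eps x =
     (SUP GR \<in> {GR \<in> Mset mu Sig.
          dWq (ref_quantile MF mu Sig x) (quantile (loss_cdf GR x)) \<le> sqrt eps}.
        ereal (Hg g (loss_cdf GR x)))"

end

theory Submission
  imports Defs
begin

text \<open>With \<open>f = F\<^sup>-\<^sup>1\<close> and \<open>q\<close> the centred quantile function of the loss, the moment
  constraints fix \<open>\<integral>q\<^sup>2 = \<sigma>\<^sub>x\<^sup>2\<close> and the Wasserstein ball becomes \<open>s = \<integral>q f \<ge> \<sigma>\<^sub>x - \<epsilon>\<^sub>x / (2\<sigma>\<^sub>x)\<close>.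
  Concavity and absolute continuity of \<open>g\<close> give \<open>\<integral>\<gamma> = 1\<close>, hence
  \<open>H\<^sub>g(G\<^sub>x) = -\<mu>\<^sub>x + \<integral>(\<gamma> - 1) q\<close>. Splitting \<open>\<gamma> - 1\<close> and \<open>q\<close> along \<open>f\<close> and its orthogonal
  complement, Cauchy--Schwarz bounds this by \<open>-\<mu>\<^sub>x + \<surd>V (c\<^sub>0 s + \<surd>(1 - c\<^sub>0\<^sup>2) \<surd>(\<sigma>\<^sub>x\<^sup>2 - s\<^sup>2))\<close>,
  a unimodal function of \<open>s\<close> with peak at \<open>\<sigma>\<^sub>x c\<^sub>0\<close>, so the worst admissible \<open>s\<close> is
  \<open>max (\<sigma>\<^sub>x - \<epsilon>\<^sub>x / (2\<sigma>\<^sub>x)) (\<sigma>\<^sub>x c\<^sub>0)\<close>. The bound is attained by a nonnegative combination of \<open>f\<close>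
  and \<open>\<gamma> - 1\<close>: it is nondecreasing, hence a quantile function, and a return vector with the
  prescribed mean and covariance whose loss has this quantile function is obtained by adding an
  independent discrete vector, orthogonal to \<open>x\<close>, that carries the residual covariance.\<close>

section \<open>Square-integrable functions\<close>

lemma integrable_mult_if_square_integrable:
  fixes a b :: "'a \<Rightarrow> real"
  assumes "a \<in> borel_measurable M" "b \<in> borel_measurable M"
    and "integrable M (\<lambda>x. (a x)\<^sup>2)" "integrable M (\<lambda>x. (b x)\<^sup>2)"
  shows "integrable M (\<lambda>x. a x * b x)"
proof (rule Bochner_Integration.integrable_bound[where f="\<lambda>x. (a x)\<^sup>2 + (b x)\<^sup>2"])
  show "integrable M (\<lambda>x. (a x)\<^sup>2 + (b x)\<^sup>2)" using assms by auto
  show "(\<lambda>x. a x * b x) \<in> borel_measurable M" using assms by auto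
  have "\<bar>a x\<bar> * \<bar>b x\<bar> \<le> (a x)\<^sup>2 + (b x)\<^sup>2" for x
    using sum_squares_bound[of "\<bar>a x\<bar>" "\<bar>b x\<bar>"] mult_nonneg_nonneg[OF abs_ge_zero abs_ge_zero, of "a x" "b x"]
    unfolding power2_abs by linarith
  then show "AE x in M. norm (a x * b x) \<le> norm ((a x)\<^sup>2 + (b x)\<^sup>2)"
    by (intro AE_I2) (simp add: abs_mult)
qed

lemma integral_mult_square_le:
  fixes a b :: "'a \<Rightarrow> real"
  assumes "a \<in> borel_measurable M" "b \<in> borel_measurable M"
    and "integrable M (\<lambda>x. (a x)\<^sup>2)" "integrable M (\<lambda>x. (b x)\<^sup>2)"
  shows "(\<integral>x. a x * b x \<partial>M)\<^sup>2 \<le> (\<integral>x. (a x)\<^sup>2 \<partial>M) * (\<integral>x. (b x)\<^sup>2 \<partial>M)"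
proof -
  define A B C where "A = (\<integral>x. (a x)\<^sup>2 \<partial>M)" and "B = (\<integral>x. (b x)\<^sup>2 \<partial>M)"
    and "C = (\<integral>x. a x * b x \<partial>M)"
  have ab: "integrable M (\<lambda>x. a x * b x)"
    using integrable_mult_if_square_integrable assms by blast
  have quadratic: "0 \<le> A - 2 * t * C + t\<^sup>2 * B" for t
  proof -
    have "0 \<le> (\<integral>x. (a x - t * b x)\<^sup>2 \<partial>M)" by simp
    also have "\<dots> = (\<integral>x. (a x)\<^sup>2 - 2 * t * (a x * b x) + t\<^sup>2 * (b x)\<^sup>2 \<partial>M)"
      by (rule Bochner_Integration.integral_cong) (auto simp: power2_eq_square algebra_simps)
    also have "\<dots> = A - 2 * t * C + t\<^sup>2 * B"
      using assms ab by (simp add: A_def B_def C_def)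
    finally show ?thesis .
  qed
  show ?thesis
  proof (cases "B = 0")
    case True
    have "C = 0"
    proof (rule ccontr)
      assume "C \<noteq> 0"
      with quadratic[of "(A + 1) / (2 * C)"] True show False by (simp add: field_simps)
    qed
    with True show ?thesis by (simp add: A_def B_def C_def)
  next
    case False
    moreover have "0 \<le> B" by (simp add: B_def)
    ultimately have "B > 0" by simp
    with quadratic[of "C / B"] have "0 \<le> A * B - C\<^sup>2" by (simp add: field_simps power2_eq_square)
    then show ?thesis by (simp add: A_def B_def C_def)
  qed
qed

lemma integral_lincomb_mult:
  fixes a b c d :: "'a \<Rightarrow> real"
  assumes "a \<in> borel_measurable M" "b \<in> borel_measurable M" "c \<in> borel_measurable M" "d \<in> borel_measurable M"
    and "integrable M (\<lambda>x. (a x)\<^sup>2)" "integrable M (\<lambda>x. (b x)\<^sup>2)"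
      "integrable M (\<lambda>x. (c x)\<^sup>2)" "integrable M (\<lambda>x. (d x)\<^sup>2)"
  shows "(\<integral>x. (\<alpha> * a x + \<beta> * b x) * (\<gamma> * c x + \<delta> * d x) \<partial>M) =
    \<alpha> * \<gamma> * (\<integral>x. a x * c x \<partial>M) + \<alpha> * \<delta> * (\<integral>x. a x * d x \<partial>M)
    + \<beta> * \<gamma> * (\<integral>x. b x * c x \<partial>M) + \<beta> * \<delta> * (\<integral>x. b x * d x \<partial>M)"
proof -
  have "integrable M (\<lambda>x. a x * c x)" "integrable M (\<lambda>x. a x * d x)"
    "integrable M (\<lambda>x. b x * c x)" "integrable M (\<lambda>x. b x * d x)"
    using assms by (auto intro: integrable_mult_if_square_integrable)
  moreover have "(\<lambda>x. (\<alpha> * a x + \<beta> * b x) * (\<gamma> * c x + \<delta> * d x)) = (\<lambda>x.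
      \<alpha> * \<gamma> * (a x * c x) + \<alpha> * \<delta> * (a x * d x) + \<beta> * \<gamma> * (b x * c x) + \<beta> * \<delta> * (b x * d x))"
    by (simp add: algebra_simps)
  ultimately show ?thesis by simp
qed

lemma square_integrable_lincomb:
  fixes a b :: "'a \<Rightarrow> real"
  assumes "a \<in> borel_measurable M" "b \<in> borel_measurable M"
    and "integrable M (\<lambda>x. (a x)\<^sup>2)" "integrable M (\<lambda>x. (b x)\<^sup>2)"
  shows "integrable M (\<lambda>x. (\<alpha> * a x + \<beta> * b x)\<^sup>2)"
proof -
  have "(\<lambda>x. (\<alpha> * a x + \<beta> * b x)\<^sup>2) = (\<lambda>x. \<alpha>\<^sup>2 * (a x)\<^sup>2 + 2 * \<alpha> * \<beta> * (a x * b x) + \<beta>\<^sup>2 * (b x)\<^sup>2)"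
    by (simp add: power2_eq_square algebra_simps)
  then show ?thesis using assms integrable_mult_if_square_integrable[OF assms] by simp
qed

lemma integral_lincomb_square:
  fixes a b :: "'a \<Rightarrow> real"
  assumes "a \<in> borel_measurable M" "b \<in> borel_measurable M"
    and "integrable M (\<lambda>x. (a x)\<^sup>2)" "integrable M (\<lambda>x. (b x)\<^sup>2)"
  shows "(\<integral>x. (\<alpha> * a x + \<beta> * b x)\<^sup>2 \<partial>M) =
    \<alpha>\<^sup>2 * (\<integral>x. (a x)\<^sup>2 \<partial>M) + 2 * \<alpha> * \<beta> * (\<integral>x. a x * b x \<partial>M) + \<beta>\<^sup>2 * (\<integral>x. (b x)\<^sup>2 \<partial>M)"
  using integral_lincomb_mult[OF assms(1,2,1,2) assms(3,4,3,4), of \<alpha> \<beta> \<alpha> \<beta>]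
  by (simp add: power2_eq_square mult.commute algebra_simps)

lemma (in finite_measure) square_integrable_add_const:
  fixes f :: "'a \<Rightarrow> real"
  assumes "f \<in> borel_measurable M" "integrable M (\<lambda>x. (f x)\<^sup>2)"
  shows "integrable M (\<lambda>x. (f x + c)\<^sup>2)"
proof -
  have "(\<lambda>x. (f x + c)\<^sup>2) = (\<lambda>x. (f x)\<^sup>2 + 2 * c * f x + c\<^sup>2)"
    by (simp add: power2_eq_square algebra_simps)
  then show ?thesis using assms square_integrable_imp_integrable[OF assms] by simp
qed

section \<open>The uniform distribution on (0,1) and quantile functions\<close>

definition uniform01 :: "real measure" where
  "uniform01 = restrict_space lborel {0<..<1}"

lemma space_uniform01 [simp]: "space uniform01 = {0<..<1}"
  by (simp add: uniform01_def space_restrict_space)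

interpretation uniform01: prob_space uniform01
  unfolding uniform01_def by (rule prob_space_restrict_space) auto

lemma measure_uniform01_space [simp]: "measure uniform01 {0<..<1} = 1"
  using uniform01.prob_space by simp

lemma set_integral_eq_uniform01:
  "set_lebesgue_integral lborel {0<..<1} h = integral\<^sup>L uniform01 h" for h :: "real \<Rightarrow> real"
  unfolding set_lebesgue_integral_def uniform01_def by (subst integral_restrict_space) auto

lemma set_integrable_iff_uniform01:
  "set_integrable lborel {0<..<1} h \<longleftrightarrow> integrable uniform01 h" for h :: "real \<Rightarrow> real"
  unfolding uniform01_def by (subst set_integrable_eq) auto

lemma measure_uniform01: "A \<subseteq> {0<..<1} \<Longrightarrow> measure uniform01 A = measure lborel A"
  unfolding uniform01_def by (rule measure_restrict_space) auto

lemma sets_uniform01_iff: "A \<in> sets uniform01 \<longleftrightarrow> A \<subseteq> {0<..<1} \<and> A \<in> sets borel"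
  by (auto simp: uniform01_def sets_restrict_space_iff)

lemma borel_measurable_uniform01_mono:
  "mono_on {0<..<1} Y \<Longrightarrow> Y \<in> borel_measurable uniform01" for Y :: "real \<Rightarrow> real"
  using borel_measurable_mono_on_fnc unfolding uniform01_def
  by (simp add: measurable_restrict_space1)

lemma AE_uniform01_iff: "(AE u in uniform01. P u) \<longleftrightarrow> (AE u in lborel. u \<in> {0<..<1} \<longrightarrow> P u)"
  unfolding uniform01_def by (rule AE_restrict_space_iff) auto

lemma measure_uniform01_Ioc: "0 \<le> a \<Longrightarrow> a \<le> b \<Longrightarrow> b < 1 \<Longrightarrow> measure uniform01 {a<..b} = b - a"
  by (subst measure_uniform01) auto

lemma
  assumes "real_distribution N"
  shows distr_quantile_uniform01: "distr uniform01 borel (quantile (cdf N)) = N"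
    and borel_measurable_quantile: "quantile (cdf N) \<in> borel_measurable uniform01"
    and mono_on_quantile: "mono_on {0<..<1} (quantile (cdf N))"
proof -
  interpret cdf_distribution N using assms by (simp add: cdf_distribution_def)
  have "quantile (cdf N) = I" by (simp add: quantile_def[abs_def])
  then show "distr uniform01 borel (quantile (cdf N)) = N"
    and "quantile (cdf N) \<in> borel_measurable uniform01"
    and "mono_on {0<..<1} (quantile (cdf N))"
    using distr_I_eq_M measurable_CI mono_I
    by (simp_all add: uniform01_def measurable_restrict_space1)
qed

lemma
  fixes h :: "real \<Rightarrow> real"
  assumes "real_distribution N" "h \<in> borel_measurable borel"
  shows integrable_quantile_iff: "integrable uniform01 (\<lambda>u. h (quantile (cdf N) u)) \<longleftrightarrow> integrable N h"
    and integral_quantile: "integral\<^sup>L uniform01 (\<lambda>u. h (quantile (cdf N) u)) = integral\<^sup>L N h"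
  using integrable_distr_eq[OF borel_measurable_quantile[OF assms(1)] assms(2)]
    integral_distr[OF borel_measurable_quantile[OF assms(1)] assms(2)]
  by (simp_all add: distr_quantile_uniform01[OF assms(1)])

lemma quantile_distr_uniform01_eq:
  fixes Y :: "real \<Rightarrow> real"
  assumes mono: "mono_on {0<..<1} Y" and u: "u \<in> {0<..<1}"
    and left_cont: "(Y \<longlongrightarrow> Y u) (at_left u)"
  shows "quantile (cdf (distr uniform01 borel Y)) u = Y u"
proof -
  have Y_meas: "Y \<in> borel_measurable uniform01" by (rule borel_measurable_uniform01_mono[OF mono])
  have cdf_eq: "cdf (distr uniform01 borel Y) y = measure uniform01 {v\<in>{0<..<1}. Y v \<le> y}" for y
    unfolding cdf_def using Y_meas
    by (subst measure_distr) (auto intro!: arg_cong[where f="measure uniform01"])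
  have sublevel_sets: "{v\<in>{0<..<1}. Y v \<le> y} \<in> sets uniform01" for y
    using measurable_sets[OF Y_meas, of "{..y}"] by (simp add: vimage_def Int_def conj_commute)
  have "u \<le> cdf (distr uniform01 borel Y) (Y u)"
  proof -
    have "{0<..u} \<subseteq> {v\<in>{0<..<1}. Y v \<le> Y u}"
      using u mono by (auto simp: mono_on_def)
    then have "measure uniform01 {0<..u} \<le> measure uniform01 {v\<in>{0<..<1}. Y v \<le> Y u}"
      using sublevel_sets by (intro uniform01.finite_measure_mono) auto
    then show ?thesis using u by (simp add: cdf_eq measure_uniform01_Ioc)
  qed
  moreover have "Y u \<le> y" if "u \<le> cdf (distr uniform01 borel Y) y" for y
  proof (rule ccontr)
    assume "\<not> Y u \<le> y"
    then have "eventually (\<lambda>v. y < Y v) (at_left u)"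
      using left_cont by (intro order_tendstoD) auto
    then obtain b where b: "b < u" "\<And>v. b < v \<Longrightarrow> v < u \<Longrightarrow> y < Y v"
      by (auto simp: eventually_at_left_field)
    define c where "c = max b 0"
    have "{v\<in>{0<..<1}. Y v \<le> y} \<subseteq> {0<..c}"
    proof
      fix v assume v: "v \<in> {v\<in>{0<..<1}. Y v \<le> y}"
      have "v < u"
        using mono u v \<open>\<not> Y u \<le> y\<close> by (force simp: mono_on_def not_less)
      with b(2)[of v] v show "v \<in> {0<..c}" by (force simp: c_def le_max_iff_disj)
    qed
    then have "measure uniform01 {v\<in>{0<..<1}. Y v \<le> y} \<le> measure uniform01 {0<..c}"
      using b u by (intro uniform01.finite_measure_mono) (auto simp: sets_uniform01_iff c_def)
    also have "\<dots> = c" using b u by (simp add: measure_uniform01_Ioc c_def)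
    finally have "u \<le> c" using that by (simp add: cdf_eq)
    then show False using b u by (auto simp: c_def le_max_iff_disj)
  qed
  ultimately show ?thesis
    unfolding quantile_def by (intro cInf_eq_minimum) auto
qed

text \<open>A monotone function is continuous off a countable, hence null, set.\<close>
lemma AE_quantile_distr_uniform01_eq:
  fixes Y :: "real \<Rightarrow> real"
  assumes mono: "mono_on {0<..<1} Y"
  shows "AE u in uniform01. quantile (cdf (distr uniform01 borel Y)) u = Y u"
proof -
  have "countable {a\<in>{0<..<1}. \<not> isCont Y a}"
    by (rule mono_on_ctble_discont_open) (auto simp: mono)
  then have "AE u in lborel. u \<notin> {a\<in>{0<..<1}. \<not> isCont Y a}"
    by (intro AE_not_in countable_imp_null_set_lborel)
  then show ?thesis
    unfolding AE_uniform01_iff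
  proof (rule AE_mp, intro AE_I2 impI)
    fix u assume "u \<notin> {a\<in>{0<..<1}. \<not> isCont Y a}" "u \<in> {0<..<1}"
    then have "(Y \<longlongrightarrow> Y u) (at_left u)"
      by (simp add: isCont_def filterlim_at_split)
    then show "quantile (cdf (distr uniform01 borel Y)) u = Y u"
      by (rule quantile_distr_uniform01_eq[OF mono \<open>u \<in> {0<..<1}\<close>])
  qed
qed

section \<open>Concave distortion functions\<close>

definition secant_slope :: "(real \<Rightarrow> real) \<Rightarrow> real \<Rightarrow> real \<Rightarrow> real" where
  "secant_slope g a b = (g b - g a) / (b - a)"

lemma secant_slope_commute: "secant_slope g a b = secant_slope g b a"
  unfolding secant_slope_def by (metis minus_diff_eq minus_divide_divide)

lemma concave_on_secant_slope_le:
  assumes "concave_on I g" "x \<in> I" "y \<in> I" "x < t" "t < y"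
  shows "secant_slope g x y \<le> secant_slope g x t" and "secant_slope g t y \<le> secant_slope g x y"
proof -
  have "convex_on I (\<lambda>x. - g x)" using assms(1) by (simp add: concave_on_def)
  note slopes = convex_on_slope_le[OF this assms(2-5)]
  have neg: "(- g p - - g q) / (p - q) = - secant_slope g p q" for p q
    unfolding secant_slope_def by (metis minus_diff_eq minus_divide_right minus_diff_minus)
  show "secant_slope g x y \<le> secant_slope g x t" "secant_slope g t y \<le> secant_slope g x y"
    using slopes unfolding neg by simp_all
qed

lemma concave_on_secant_slope_antimono:
  assumes "concave_on {0..1} g" "0 \<le> a" "a < b" "b \<le> c" "c < d" "d \<le> 1"
  shows "secant_slope g c d \<le> secant_slope g a b"
proof (cases "b = c")
  case True
  then show ?thesis
    using concave_on_secant_slope_le[OF assms(1), of a d b] assms by (simp add: secant_slope_commute)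
next
  case False
  then have "b < c" using assms by simp
  then have "secant_slope g c d \<le> secant_slope g b d" "secant_slope g b d \<le> secant_slope g b c"
    "secant_slope g b c \<le> secant_slope g a c" "secant_slope g a c \<le> secant_slope g a b"
    using concave_on_secant_slope_le[OF assms(1), of a c b] concave_on_secant_slope_le[OF assms(1), of b d c]
      assms by auto
  then show ?thesis by linarith
qed

lemma mono_on_secant_slope_nonneg:
  "mono_on {0..1} g \<Longrightarrow> 0 \<le> a \<Longrightarrow> a < b \<Longrightarrow> b \<le> 1 \<Longrightarrow> 0 \<le> secant_slope g a b"
  unfolding secant_slope_def mono_on_def by (auto intro!: divide_nonneg_pos)

lemma left_deriv_concave_eq_Inf:
  assumes conc: "concave_on {0..1} g" and mono: "mono_on {0..1} g" and x: "0 < x" "x \<le> 1"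
  shows "left_deriv g x = Inf ((\<lambda>t. secant_slope g t x) ` {0<..<x})"
proof -
  let ?L = "Inf ((\<lambda>t. secant_slope g t x) ` {0<..<x})"
  have bdd: "bdd_below ((\<lambda>t. secant_slope g t x) ` {0<..<x})"
    using mono_on_secant_slope_nonneg[OF mono] x by (intro bdd_belowI[of _ 0]) auto
  have "((\<lambda>t. secant_slope g t x) \<longlongrightarrow> ?L) (at_left x)"
  proof (rule order_tendstoI)
    fix a assume "a < ?L"
    have "eventually (\<lambda>t. t \<in> {0<..<x}) (at_left x)"
      using x by (intro eventually_at_leftI[of 0]) auto
    then show "eventually (\<lambda>t. a < secant_slope g t x) (at_left x)"
    proof eventually_elim
      case (elim t)
      then have "?L \<le> secant_slope g t x" using bdd by (intro cInf_lower) auto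
      with \<open>a < ?L\<close> show ?case by simp
    qed
  next
    fix a assume "?L < a"
    then obtain t0 where t0: "t0 \<in> {0<..<x}" "secant_slope g t0 x < a"
      using cInf_lessD[of "(\<lambda>t. secant_slope g t x) ` {0<..<x}" a] x by auto
    have "eventually (\<lambda>t. t \<in> {t0<..<x}) (at_left x)"
      using t0 by (intro eventually_at_leftI[of t0]) auto
    then show "eventually (\<lambda>t. secant_slope g t x < a) (at_left x)"
    proof eventually_elim
      case (elim t)
      then have "secant_slope g t x \<le> secant_slope g t0 x"
        using concave_on_secant_slope_le(2)[OF conc, of t0 x t] t0 x by simp
      with t0 show ?case by simp
    qed
  qed
  then show ?thesis
    unfolding left_deriv_def secant_slope_def by (intro tendsto_Lim) auto
qed

lemma left_deriv_concave_bounds: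
  assumes conc: "concave_on {0..1} g" and mono: "mono_on {0..1} g"
    and xy: "0 < x" "x < y" "y \<le> 1"
  shows "left_deriv g y \<le> secant_slope g x y" and "secant_slope g x y \<le> left_deriv g x"
    and "0 \<le> left_deriv g y"
proof -
  have y: "left_deriv g y = Inf ((\<lambda>t. secant_slope g t y) ` {0<..<y})"
    and x: "left_deriv g x = Inf ((\<lambda>t. secant_slope g t x) ` {0<..<x})"
    using xy by (auto intro: left_deriv_concave_eq_Inf[OF conc mono])
  have "bdd_below ((\<lambda>t. secant_slope g t y) ` {0<..<y})"
    using mono_on_secant_slope_nonneg[OF mono] xy by (intro bdd_belowI[of _ 0]) auto
  then show "left_deriv g y \<le> secant_slope g x y"
    unfolding y using xy by (intro cInf_lower) auto
  show "secant_slope g x y \<le> left_deriv g x"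
    unfolding x using xy concave_on_secant_slope_antimono[OF conc, of _ x x y]
    by (intro cInf_greatest) auto
  show "0 \<le> left_deriv g y"
    unfolding y using xy mono_on_secant_slope_nonneg[OF mono]
    by (intro cInf_greatest) auto
qed

text \<open>A Riemann-sum argument: increments bounded by mesh times the increment of a monotone
  function add up to at most (b - a) / N * (L b - L a) over N equal steps.\<close>
lemma eq_if_increments_bounded:
  fixes D L :: "real \<Rightarrow> real"
  assumes "a \<le> b"
    and bound: "\<And>w v. a \<le> w \<Longrightarrow> w \<le> v \<Longrightarrow> v \<le> b \<Longrightarrow> \<bar>D v - D w\<bar> \<le> (v - w) * (L v - L w)"
  shows "D b = D a"
proof -
  have steps: "\<bar>D (a + real k * h) - D a\<bar> \<le> h * (L (a + real k * h) - L a)"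
    if "N > 0" "k \<le> N" "h = (b - a) / real N" for N k h
    using that(2)
  proof (induction k)
    case (Suc k)
    have "0 \<le> h" "real N * h = b - a" using \<open>a \<le> b\<close> that by auto
    then have "real (Suc k) * h \<le> b - a"
      using mult_right_mono[of "real (Suc k)" "real N" h] Suc.prems by simp
    then have "\<bar>D (a + real (Suc k) * h) - D (a + real k * h)\<bar>
        \<le> h * (L (a + real (Suc k) * h) - L (a + real k * h))"
      using bound[of "a + real k * h" "a + real (Suc k) * h"] \<open>0 \<le> h\<close>
      by (simp add: algebra_simps)
    with Suc show ?case by (simp add: algebra_simps)
  qed simp
  show ?thesis
  proof (rule ccontr)
    assume "D b \<noteq> D a"
    obtain N :: nat where N: "real N > (b - a) * \<bar>L b - L a\<bar> / \<bar>D b - D a\<bar>"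
      using reals_Archimedean2 by blast
    moreover have "0 \<le> (b - a) * \<bar>L b - L a\<bar> / \<bar>D b - D a\<bar>" using \<open>a \<le> b\<close> by simp
    ultimately have "N > 0" by (cases N) auto
    have "\<bar>D b - D a\<bar> \<le> ((b - a) / real N) * (L b - L a)"
      using steps[OF \<open>N > 0\<close> order.refl refl] \<open>N > 0\<close> by simp
    also have "\<dots> \<le> ((b - a) / real N) * \<bar>L b - L a\<bar>"
      using \<open>a \<le> b\<close> by (intro mult_left_mono) auto
    also have "\<dots> < \<bar>D b - D a\<bar>"
      using N \<open>N > 0\<close> \<open>D b \<noteq> D a\<close> by (simp add: field_simps)
    finally show False by simp
  qed
qed

lemma abs_cont_01_tendsto_at_right_0:
  assumes "abs_cont_01 g"
  shows "(g \<longlongrightarrow> g 0) (at_right 0)"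
proof (rule tendstoI)
  fix e :: real assume "e > 0"
  then obtain d where "d > 0" and d: "\<And>(n::nat) (a::nat \<Rightarrow> real) b. (\<forall>k<n. 0 \<le> a k \<and> a k \<le> b k \<and> b k \<le> 1) \<and>
      (\<forall>k<n. \<forall>l<n. k \<noteq> l \<longrightarrow> b k \<le> a l \<or> b l \<le> a k) \<and>
      (\<Sum>k<n. b k - a k) < d \<longrightarrow> (\<Sum>k<n. \<bar>g (b k) - g (a k)\<bar>) < e"
    using assms unfolding abs_cont_01_def by blast
  have "eventually (\<lambda>t. t \<in> {0<..<min d 1}) (at_right 0)"
    using \<open>d > 0\<close> by (intro eventually_at_rightI[of 0 "min d 1"]) auto
  then show "eventually (\<lambda>t. dist (g t) (g 0) < e) (at_right 0)"
  proof eventually_elim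
    case (elim t)
    have "(\<Sum>k<Suc 0. \<bar>g t - g 0\<bar>) < e"
      using d[of "Suc 0" "\<lambda>_. 0" "\<lambda>_. t"] elim by simp
    then show ?case by (simp add: dist_real_def)
  qed
qed

locale concave_distortion =
  fixes g :: "real \<Rightarrow> real"
  assumes distortion: "distortion g" and concave: "concave_on {0..1} g"
begin

lemma mono_on_g: "mono_on {0..1} g" and g_0: "g 0 = 0" and g_1: "g 1 = 1"
  using distortion by (simp_all add: distortion_def)

lemma gam_secant_slope_bounds:
  assumes "0 < w" "w < v" "v < 1"
  shows "gam g w \<le> secant_slope g (1 - v) (1 - w)" "secant_slope g (1 - v) (1 - w) \<le> gam g v"
  using left_deriv_concave_bounds[OF concave mono_on_g, of "1 - v" "1 - w"] assms by (auto simp: gam_def)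

lemma mono_on_gam: "mono_on {0<..<1} (gam g)"
proof (rule mono_onI)
  fix w v :: real assume "w \<in> {0<..<1}" "v \<in> {0<..<1}" "w \<le> v"
  then show "gam g w \<le> gam g v"
    using gam_secant_slope_bounds[of w v] by (cases "w = v") auto
qed

lemma gam_nonneg: "u \<in> {0<..<1} \<Longrightarrow> 0 \<le> gam g u"
  using left_deriv_concave_bounds(3)[OF concave mono_on_g, of "(1 - u) / 2" "1 - u"] by (auto simp: gam_def)

lemma borel_measurable_gam: "gam g \<in> borel_measurable uniform01"
  by (rule borel_measurable_uniform01_mono[OF mono_on_gam])

lemma gam_increment_bounds:
  assumes "0 < w" "w \<le> v" "v < 1"
  shows "(v - w) * gam g w \<le> g (1 - w) - g (1 - v)" and "g (1 - w) - g (1 - v) \<le> (v - w) * gam g v"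
proof -
  have "(v - w) * gam g w \<le> g (1 - w) - g (1 - v) \<and> g (1 - w) - g (1 - v) \<le> (v - w) * gam g v"
  proof (cases "w = v")
    case False
    with assms have "w < v" by simp
    then show ?thesis
      using gam_secant_slope_bounds[OF \<open>0 < w\<close> \<open>w < v\<close> \<open>v < 1\<close>]
      by (simp add: secant_slope_def field_simps)
  qed simp
  then show "(v - w) * gam g w \<le> g (1 - w) - g (1 - v)" "g (1 - w) - g (1 - v) \<le> (v - w) * gam g v"
    by auto
qed

context
  assumes integrable_gam: "integrable uniform01 (gam g)"
begin

lemma integrable_indicator_gam: "integrable uniform01 (\<lambda>u. indicator A u * gam g u)"
  if "A \<inter> {0<..<1} \<in> sets borel"
proof -
  have "A \<inter> {0<..<1} \<in> sets uniform01" using that by (simp add: sets_uniform01_iff)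
  from integrable_mult_indicator[OF this integrable_gam] show ?thesis
    by (rule Bochner_Integration.integrable_cong[THEN iffD1, rotated -1]) (auto split: split_indicator)
qed

lemma integral_indicator_gam_bounds:
  assumes "0 < w" "w \<le> v" "v < 1"
  shows "(v - w) * gam g w \<le> (\<integral>u. indicator {w<..v} u * gam g u \<partial>uniform01)"
    and "(\<integral>u. indicator {w<..v} u * gam g u \<partial>uniform01) \<le> (v - w) * gam g v"
proof -
  have Ioc: "{w<..v} \<in> sets uniform01" "{w<..v} \<inter> {0<..<1} = {w<..v}"
    using assms by (auto simp: sets_uniform01_iff)
  have const: "(\<integral>u. indicator {w<..v} u * c \<partial>uniform01) = (v - w) * c" for c :: real
    using assms Ioc by (simp add: measure_uniform01_Ioc)
  have int_const: "integrable uniform01 (\<lambda>u. indicator {w<..v} u * c)" for c :: real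
    using integrable_real_mult_indicator[OF Ioc(1) uniform01.integrable_const[of c]] by (simp add: mult.commute)
  have int_gam: "integrable uniform01 (\<lambda>u. indicator {w<..v} u * gam g u)"
    by (rule integrable_indicator_gam) simp
  have "gam g w \<le> gam g u" "gam g u \<le> gam g v" if "u \<in> {w<..v}" for u
    using that assms by (auto intro!: mono_onD[OF mono_on_gam])
  then have "indicator {w<..v} u * gam g w \<le> indicator {w<..v} u * gam g u"
    "indicator {w<..v} u * gam g u \<le> indicator {w<..v} u * gam g v" for u
    by (auto split: split_indicator)
  then have "(\<integral>u. indicator {w<..v} u * gam g w \<partial>uniform01) \<le> (\<integral>u. indicator {w<..v} u * gam g u \<partial>uniform01)"
    "(\<integral>u. indicator {w<..v} u * gam g u \<partial>uniform01) \<le> (\<integral>u. indicator {w<..v} u * gam g v \<partial>uniform01)"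
    by (intro integral_mono int_const int_gam; simp)+
  then show "(v - w) * gam g w \<le> (\<integral>u. indicator {w<..v} u * gam g u \<partial>uniform01)"
    "(\<integral>u. indicator {w<..v} u * gam g u \<partial>uniform01) \<le> (v - w) * gam g v"
    unfolding const .
qed

lemma integral_indicator_gam:
  assumes "0 < a" "a \<le> b" "b < 1"
  shows "(\<integral>u. indicator {a<..b} u * gam g u \<partial>uniform01) = g (1 - a) - g (1 - b)"
proof -
  define D where "D v = (\<integral>u. indicator {a<..v} u * gam g u \<partial>uniform01) + g (1 - v)" for v
  have "D b = D a"
  proof (rule eq_if_increments_bounded[where a = a and b = b and D = D and L = "gam g"])
    show "a \<le> b" by fact
  next
    fix w v assume wv: "a \<le> w" "w \<le> v" "v \<le> b"
    have split: "indicator {a<..v} u * gam g u = indicator {a<..w} u * gam g u + indicator {w<..v} u * gam g u"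
      for u using wv by (auto split: split_indicator)
    have "(\<integral>u. indicator {a<..v} u * gam g u \<partial>uniform01) =
        (\<integral>u. indicator {a<..w} u * gam g u \<partial>uniform01) + (\<integral>u. indicator {w<..v} u * gam g u \<partial>uniform01)"
      unfolding split by (intro Bochner_Integration.integral_add integrable_indicator_gam) simp_all
    then have "D v - D w = (\<integral>u. indicator {w<..v} u * gam g u \<partial>uniform01) - (g (1 - w) - g (1 - v))"
      by (simp add: D_def)
    then show "\<bar>D v - D w\<bar> \<le> (v - w) * (gam g v - gam g w)"
      using integral_indicator_gam_bounds[of w v] gam_increment_bounds[of w v] wv assms
      by (simp add: abs_le_iff algebra_simps)
  qed
  then show ?thesis by (simp add: D_def)
qed

lemma integral_gam:
  assumes "abs_cont_01 g"
  shows "integral\<^sup>L uniform01 (gam g) = 1"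
proof -
  define a where "a n = 1 / (real n + 2)" for n :: nat
  have a: "0 < a n" "a n \<le> 1 - a n" "a n \<le> 1" for n
    by (auto simp: a_def field_simps)
  have "(\<lambda>n. 1 / real (n + 2)) \<longlonglongrightarrow> 0"
    using LIMSEQ_ignore_initial_segment[OF lim_const_over_n[of 1], of 2] by simp
  then have "a \<longlonglongrightarrow> 0" unfolding a_def[abs_def] by (simp add: add.commute)
  then have a_lim: "filterlim a (at_right 0) sequentially"
    using a(1) by (intro tendsto_imp_filterlim_at_right always_eventually) auto
  have "(\<lambda>n. \<integral>u. indicator {a n<..1 - a n} u * gam g u \<partial>uniform01) \<longlonglongrightarrow> integral\<^sup>L uniform01 (gam g)"
  proof (rule integral_dominated_convergence[where w="\<lambda>u. \<bar>gam g u\<bar>"])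
    show "integrable uniform01 (\<lambda>u. \<bar>gam g u\<bar>)" using integrable_gam by simp
    show "(\<lambda>u. indicator {a n<..1 - a n} u * gam g u) \<in> borel_measurable uniform01" for n
      by (rule borel_measurable_integrable, rule integrable_indicator_gam) simp
    show "AE u in uniform01. norm (indicator {a n<..1 - a n} u * gam g u) \<le> \<bar>gam g u\<bar>" for n
      by (intro AE_I2) (auto split: split_indicator)
    show "AE u in uniform01. (\<lambda>n. indicator {a n<..1 - a n} u * gam g u) \<longlonglongrightarrow> gam g u"
    proof (intro AE_I2)
      fix u assume "u \<in> space uniform01"
      then have "0 < min u (1 - u)" by simp
      with \<open>a \<longlonglongrightarrow> 0\<close> have "eventually (\<lambda>n. a n < min u (1 - u)) sequentially"
        by (rule order_tendstoD)
      then have "eventually (\<lambda>n. indicator {a n<..1 - a n} u * gam g u = gam g u) sequentially"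
        by eventually_elim (auto split: split_indicator)
      then show "(\<lambda>n. indicator {a n<..1 - a n} u * gam g u) \<longlonglongrightarrow> gam g u"
        by (rule tendsto_eventually)
    qed
  qed (rule borel_measurable_gam)
  moreover have "(\<lambda>n. \<integral>u. indicator {a n<..1 - a n} u * gam g u \<partial>uniform01) = (\<lambda>n. g (1 - a n) - g (a n))"
    using a by (simp add: integral_indicator_gam)
  moreover have "(\<lambda>n. g (1 - a n) - g (a n)) \<longlonglongrightarrow> 1 - 0"
  proof (intro tendsto_diff)
    txt \<open>Absolute continuity is needed only here: a concave \<open>g\<close> may jump at 0.\<close>
    show "(\<lambda>n. g (a n)) \<longlonglongrightarrow> 0"
      using filterlim_compose[OF abs_cont_01_tendsto_at_right_0[OF assms] a_lim] g_0 by simp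
    txt \<open>Near 1 concavity alone suffices: the chord gives 1 - t \<le> g (1 - t) \<le> 1.\<close>
    have "eventually (\<lambda>n. 1 - a n \<le> g (1 - a n)) sequentially"
      using concave_onD[OF concave, of "1 - a n" 0 1 for n] a g_0 g_1
      by (intro always_eventually allI) (simp add: less_imp_le)
    moreover have "eventually (\<lambda>n. g (1 - a n) \<le> 1) sequentially"
      using mono_onD[OF mono_on_g, of "1 - a n" 1 for n] a g_1
      by (intro always_eventually allI) (simp add: less_imp_le)
    moreover have "(\<lambda>n. 1 - a n) \<longlonglongrightarrow> 1"
      using tendsto_diff[OF tendsto_const \<open>a \<longlonglongrightarrow> 0\<close>] by simp
    ultimately show "(\<lambda>n. g (1 - a n)) \<longlonglongrightarrow> 1"
      using tendsto_const by (rule tendsto_sandwich)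
  qed
  ultimately show ?thesis using LIMSEQ_unique by fastforce
qed

end

end

section \<open>The extremal problem in the plane of \<open>f\<close> and \<open>\<gamma>\<close>\<close>

text \<open>If \<open>\<integral>q\<^sup>2 = \<sigma>\<^sup>2\<close>, \<open>\<integral>q f = s\<close> and \<open>\<integral>h f = c \<surd>V\<close> for unit \<open>f\<close> and \<open>\<integral>h\<^sup>2 = V\<close>, then
  Cauchy--Schwarz applied to the parts of \<open>h\<close> and \<open>q\<close> orthogonal to \<open>f\<close> gives
  \<open>\<integral>h q \<le> \<surd>V * profile c \<sigma> s\<close>, with equality when these parts are aligned.\<close>
definition profile :: "real \<Rightarrow> real \<Rightarrow> real \<Rightarrow> real" where
  "profile c \<sigma> s = c * s + sqrt (1 - c\<^sup>2) * sqrt (\<sigma>\<^sup>2 - s\<^sup>2)"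

text \<open>The constraint \<open>\<integral>(q - \<sigma> f)\<^sup>2 \<le> \<epsilon>\<close> means \<open>s \<ge> \<sigma> - \<epsilon> / (2\<sigma>)\<close>, and \<open>profile c \<sigma>\<close> is
  unimodal with peak at \<open>\<sigma> c\<close>.\<close>
definition optimal_cov :: "real \<Rightarrow> real \<Rightarrow> real \<Rightarrow> real" where
  "optimal_cov c \<sigma> \<epsilon> = max (\<sigma> - \<epsilon> / (2 * \<sigma>)) (\<sigma> * c)"

lemma mult_sqrt_le_if_mult_le:
  fixes \<sigma> c s :: real
  assumes "0 \<le> c" "c \<le> 1" "0 \<le> \<sigma>" "\<sigma> * c \<le> s" "s\<^sup>2 \<le> \<sigma>\<^sup>2"
  shows "c * sqrt (\<sigma>\<^sup>2 - s\<^sup>2) \<le> sqrt (1 - c\<^sup>2) * s"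
proof -
  have "0 \<le> \<sigma> * c" using assms by simp
  then have "0 \<le> s" using assms(4) by linarith
  have "c\<^sup>2 * \<sigma>\<^sup>2 \<le> s\<^sup>2"
    using power_mono[OF assms(4) \<open>0 \<le> \<sigma> * c\<close>, of 2] by (simp add: power_mult_distrib mult.commute)
  have "c\<^sup>2 \<le> 1" using assms(1,2) by (simp add: power_le_one)
  have "(c * sqrt (\<sigma>\<^sup>2 - s\<^sup>2))\<^sup>2 = c\<^sup>2 * \<sigma>\<^sup>2 - c\<^sup>2 * s\<^sup>2"
    using assms(5) by (simp add: power_mult_distrib right_diff_distrib)
  also have "\<dots> \<le> s\<^sup>2 - c\<^sup>2 * s\<^sup>2" using \<open>c\<^sup>2 * \<sigma>\<^sup>2 \<le> s\<^sup>2\<close> by linarith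
  also have "\<dots> = (sqrt (1 - c\<^sup>2) * s)\<^sup>2"
    using \<open>c\<^sup>2 \<le> 1\<close> by (simp add: power_mult_distrib left_diff_distrib)
  finally show ?thesis
    by (rule power2_le_imp_le) (use \<open>0 \<le> s\<close> \<open>c\<^sup>2 \<le> 1\<close> in simp)
qed

lemma profile_le:
  fixes \<sigma> c s :: real
  assumes "0 \<le> c" "c \<le> 1" "0 \<le> \<sigma>" "s\<^sup>2 \<le> \<sigma>\<^sup>2"
  shows "profile c \<sigma> s \<le> \<sigma>"
proof -
  define k t where "k = sqrt (1 - c\<^sup>2)" and "t = sqrt (\<sigma>\<^sup>2 - s\<^sup>2)"
  have "c\<^sup>2 \<le> 1" using assms(1,2) by (simp add: power_le_one)
  then have "k\<^sup>2 = 1 - c\<^sup>2" "t\<^sup>2 = \<sigma>\<^sup>2 - s\<^sup>2" using assms(4) by (simp_all add: k_def t_def)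
  moreover have "(c * s + k * t)\<^sup>2 + (c * t - k * s)\<^sup>2 = (c\<^sup>2 + k\<^sup>2) * (s\<^sup>2 + t\<^sup>2)"
    by (simp add: power2_eq_square algebra_simps)
  ultimately have "(c * s + k * t)\<^sup>2 + (c * t - k * s)\<^sup>2 = \<sigma>\<^sup>2" by simp
  then have "(c * s + k * t)\<^sup>2 \<le> \<sigma>\<^sup>2" by (metis le_add_same_cancel1 zero_le_power2)
  then show ?thesis
    using assms(3) abs_le_square_iff[of "c * s + k * t" \<sigma>] by (simp add: profile_def k_def t_def)
qed

lemma profile_peak:
  fixes \<sigma> c :: real
  assumes "0 \<le> c" "c \<le> 1" "0 \<le> \<sigma>"
  shows "profile c \<sigma> (\<sigma> * c) = \<sigma>"
proof -
  have "c\<^sup>2 \<le> 1" using assms(1,2) by (simp add: power_le_one)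
  have "\<sigma>\<^sup>2 - (\<sigma> * c)\<^sup>2 = (\<sigma> * sqrt (1 - c\<^sup>2))\<^sup>2"
    using \<open>c\<^sup>2 \<le> 1\<close> by (simp add: power_mult_distrib algebra_simps)
  then have "sqrt (\<sigma>\<^sup>2 - (\<sigma> * c)\<^sup>2) = \<sigma> * sqrt (1 - c\<^sup>2)"
    using assms(3) \<open>c\<^sup>2 \<le> 1\<close> by (simp add: abs_mult)
  then show ?thesis
    using \<open>c\<^sup>2 \<le> 1\<close> by (simp add: profile_def power2_eq_square algebra_simps)
qed

lemma profile_antimono:
  fixes \<sigma> c s s' :: real
  assumes c: "0 \<le> c" "c \<le> 1" and "0 \<le> \<sigma>" "\<sigma> * c \<le> s'" "s' \<le> s" "s\<^sup>2 \<le> \<sigma>\<^sup>2"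
  shows "profile c \<sigma> s \<le> profile c \<sigma> s'"
proof -
  define k t t' where "k = sqrt (1 - c\<^sup>2)" and "t = sqrt (\<sigma>\<^sup>2 - s\<^sup>2)" and "t' = sqrt (\<sigma>\<^sup>2 - s'\<^sup>2)"
  have "0 \<le> \<sigma> * c" using assms by simp
  then have "0 \<le> s'" using assms by linarith
  then have "s'\<^sup>2 \<le> s\<^sup>2" using \<open>s' \<le> s\<close> by (simp add: power_mono)
  then have s'_sq: "s'\<^sup>2 \<le> \<sigma>\<^sup>2" using assms by linarith
  have "t \<le> t'" unfolding t_def t'_def using \<open>s'\<^sup>2 \<le> s\<^sup>2\<close> by simp
  have slopes: "c * t \<le> k * s" "c * t' \<le> k * s'"
    unfolding k_def t_def t'_def using assms s'_sq by (intro mult_sqrt_le_if_mult_le; linarith)+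
  have squares: "(s - s') * (s + s') = (t' - t) * (t' + t)"
    using assms s'_sq by (simp add: t_def t'_def power2_eq_square algebra_simps)
  have "c * (s - s') \<le> k * (t' - t)"
  proof (cases "s + s' = 0")
    case True
    with \<open>0 \<le> s'\<close> \<open>s' \<le> s\<close> have "s = 0" "s' = 0" by linarith+
    then show ?thesis by (simp add: t_def t'_def)
  next
    case False
    with \<open>0 \<le> s'\<close> \<open>s' \<le> s\<close> have "0 < s + s'" by simp
    have "c * (s - s') * (s + s') = c * ((t' - t) * (t' + t))"
      using squares by (simp add: mult.assoc)
    also have "\<dots> = (c * t' + c * t) * (t' - t)" by (simp add: algebra_simps)
    also have "\<dots> \<le> (k * s + k * s') * (t' - t)"
      using slopes \<open>t \<le> t'\<close> by (intro mult_right_mono) simp_all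
    also have "\<dots> = k * (t' - t) * (s + s')" by (simp add: algebra_simps)
    finally show ?thesis using \<open>0 < s + s'\<close> by (rule mult_right_le_imp_le)
  qed
  then show ?thesis by (simp add: profile_def k_def t_def t'_def algebra_simps)
qed

lemma
  fixes \<sigma> c \<epsilon> :: real
  assumes "0 \<le> c" "c \<le> 1" "0 < \<sigma>" "0 \<le> \<epsilon>"
  shows optimal_cov_ge: "\<sigma> * c \<le> optimal_cov c \<sigma> \<epsilon>" "\<sigma> - \<epsilon> / (2 * \<sigma>) \<le> optimal_cov c \<sigma> \<epsilon>"
    and optimal_cov_le: "optimal_cov c \<sigma> \<epsilon> \<le> \<sigma>"
    and optimal_cov_square_le: "(optimal_cov c \<sigma> \<epsilon>)\<^sup>2 \<le> \<sigma>\<^sup>2"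
proof -
  show ge: "\<sigma> * c \<le> optimal_cov c \<sigma> \<epsilon>" "\<sigma> - \<epsilon> / (2 * \<sigma>) \<le> optimal_cov c \<sigma> \<epsilon>"
    by (simp_all add: optimal_cov_def)
  show le: "optimal_cov c \<sigma> \<epsilon> \<le> \<sigma>"
    using assms by (simp add: optimal_cov_def mult_left_le)
  have "0 \<le> optimal_cov c \<sigma> \<epsilon>" using ge(1) assms by (smt (verit) mult_nonneg_nonneg)
  then show "(optimal_cov c \<sigma> \<epsilon>)\<^sup>2 \<le> \<sigma>\<^sup>2" using le by (simp add: power_mono)
qed

lemma profile_le_optimal:
  fixes \<sigma> c \<epsilon> s :: real
  assumes c: "0 \<le> c" "c \<le> 1" and "0 < \<sigma>" "0 \<le> \<epsilon>"
    and "\<sigma> - \<epsilon> / (2 * \<sigma>) \<le> s" "s\<^sup>2 \<le> \<sigma>\<^sup>2"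
  shows "profile c \<sigma> s \<le> profile c \<sigma> (optimal_cov c \<sigma> \<epsilon>)"
proof (cases "\<sigma> * c \<le> \<sigma> - \<epsilon> / (2 * \<sigma>)")
  case True
  then show ?thesis
    using assms by (intro profile_antimono) (auto simp: optimal_cov_def)
next
  case False
  then have "optimal_cov c \<sigma> \<epsilon> = \<sigma> * c" by (simp add: optimal_cov_def)
  then show ?thesis using assms profile_le[of c \<sigma> s] profile_peak[of c \<sigma>] by simp
qed

lemma optimal_cov_eq_min:
  fixes \<sigma> c \<epsilon> :: real
  assumes "0 < \<sigma>"
  shows "\<sigma> - min \<epsilon> (2 * \<sigma>\<^sup>2 * (1 - c)) / (2 * \<sigma>) = optimal_cov c \<sigma> \<epsilon>"
proof -
  have "min \<epsilon> (2 * \<sigma>\<^sup>2 * (1 - c)) / (2 * \<sigma>) = min (\<epsilon> / (2 * \<sigma>)) (\<sigma> * (1 - c))"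
    using assms by (simp add: min_divide_distrib_right power2_eq_square)
  then show ?thesis by (simp add: optimal_cov_def algebra_simps)
qed

lemma profile_optimal_cov_eq:
  fixes \<sigma> c \<epsilon> V :: real
  assumes "0 < \<sigma>"
  defines "e \<equiv> min \<epsilon> (2 * \<sigma>\<^sup>2 * (1 - c))"
  shows "(\<sigma> - e / (2 * \<sigma>)) * sqrt V * c + sqrt (e - e\<^sup>2 / (4 * \<sigma>\<^sup>2)) * sqrt (V * (1 - c\<^sup>2)) =
    sqrt V * profile c \<sigma> (optimal_cov c \<sigma> \<epsilon>)"
proof -
  define s where "s = \<sigma> - e / (2 * \<sigma>)"
  have "s = optimal_cov c \<sigma> \<epsilon>" unfolding s_def e_def by (rule optimal_cov_eq_min[OF assms(1)])
  moreover have "e - e\<^sup>2 / (4 * \<sigma>\<^sup>2) = \<sigma>\<^sup>2 - s\<^sup>2"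
    using assms(1) by (simp add: s_def field_simps power2_eq_square)
  ultimately have "sqrt (e - e\<^sup>2 / (4 * \<sigma>\<^sup>2)) = sqrt (\<sigma>\<^sup>2 - (optimal_cov c \<sigma> \<epsilon>)\<^sup>2)" by simp
  then show ?thesis
    unfolding s_def[symmetric] \<open>s = optimal_cov c \<sigma> \<epsilon>\<close> real_sqrt_mult[of V] profile_def
    by (simp add: algebra_simps)
qed

context
  fixes M :: "'a measure" and f h :: "'a \<Rightarrow> real" and V c :: real
  assumes f_meas: "f \<in> borel_measurable M" and h_meas: "h \<in> borel_measurable M"
    and f_sq_int: "integrable M (\<lambda>x. (f x)\<^sup>2)" and h_sq_int: "integrable M (\<lambda>x. (h x)\<^sup>2)"
    and f_sq: "(\<integral>x. (f x)\<^sup>2 \<partial>M) = 1" and h_sq: "(\<integral>x. (h x)\<^sup>2 \<partial>M) = V"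
    and f_h: "(\<integral>x. f x * h x \<partial>M) = c * sqrt V" and c: "0 \<le> c" "c \<le> 1"
begin

lemma integral_mult_le_profile:
  fixes q :: "'a \<Rightarrow> real"
  assumes q_meas: "q \<in> borel_measurable M" and q_sq_int: "integrable M (\<lambda>x. (q x)\<^sup>2)"
    and q_sq: "(\<integral>x. (q x)\<^sup>2 \<partial>M) = \<sigma>\<^sup>2" and "0 < \<sigma>" "0 \<le> \<epsilon>"
    and dist: "(\<integral>x. (q x - \<sigma> * f x)\<^sup>2 \<partial>M) \<le> \<epsilon>"
  shows "(\<integral>x. h x * q x \<partial>M) \<le> sqrt V * profile c \<sigma> (optimal_cov c \<sigma> \<epsilon>)"
proof -
  note L2 = f_meas h_meas q_meas f_sq_int h_sq_int q_sq_int
  define a s where "a = sqrt V" and "s = (\<integral>x. q x * f x \<partial>M)"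
  have "0 \<le> V" using h_sq[symmetric] by simp
  then have "0 \<le> a" "a\<^sup>2 = V" by (simp_all add: a_def)
  have h_f: "(\<integral>x. h x * f x \<partial>M) = c * a" using f_h by (simp add: a_def mult.commute)
  have f_q: "(\<integral>x. f x * q x \<partial>M) = s" by (simp add: s_def mult.commute)
  have "(\<integral>x. (q x - \<sigma> * f x)\<^sup>2 \<partial>M) = (\<integral>x. (1 * q x + (- \<sigma>) * f x)\<^sup>2 \<partial>M)" by simp
  also have "\<dots> = 1\<^sup>2 * \<sigma>\<^sup>2 + 2 * 1 * (- \<sigma>) * s + (- \<sigma>)\<^sup>2 * 1"
    unfolding integral_lincomb_square[OF q_meas f_meas q_sq_int f_sq_int] q_sq f_sq s_def ..
  also have "\<dots> = 2 * \<sigma> * (\<sigma> - s)" by (simp add: power2_eq_square algebra_simps)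
  finally have "\<sigma> - \<epsilon> / (2 * \<sigma>) \<le> s"
    using dist \<open>0 < \<sigma>\<close> by (simp add: field_simps)
  moreover have "s\<^sup>2 \<le> \<sigma>\<^sup>2"
    using integral_mult_square_le[OF q_meas f_meas q_sq_int f_sq_int] q_sq f_sq by (simp add: s_def)
  txt \<open>Cauchy--Schwarz for the components of \<open>h\<close> and \<open>q\<close> orthogonal to \<open>f\<close>.\<close>
  moreover have "(\<integral>x. h x * q x \<partial>M) \<le> a * profile c \<sigma> s"
  proof -
    define X where "X = (\<integral>x. (1 * h x + (- (c * a)) * f x) * (1 * q x + (- s) * f x) \<partial>M)"
    have X: "X = (\<integral>x. h x * q x \<partial>M) - c * a * s"
      unfolding X_def integral_lincomb_mult[OF h_meas f_meas q_meas f_meas h_sq_int f_sq_int q_sq_int f_sq_int]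
      using h_f f_q f_sq by (simp add: power2_eq_square)
    have "(\<integral>x. (1 * h x + (- (c * a)) * f x)\<^sup>2 \<partial>M) = V * (1 - c\<^sup>2)"
      unfolding integral_lincomb_square[OF h_meas f_meas h_sq_int f_sq_int] h_sq h_f f_sq
      using \<open>a\<^sup>2 = V\<close> by (simp add: power2_eq_square algebra_simps)
    moreover have "(\<integral>x. (1 * q x + (- s) * f x)\<^sup>2 \<partial>M) = \<sigma>\<^sup>2 - s\<^sup>2"
      unfolding integral_lincomb_square[OF q_meas f_meas q_sq_int f_sq_int] q_sq f_sq s_def[symmetric]
      by (simp add: power2_eq_square)
    moreover have "(\<integral>x. (1 * h x + (- (c * a)) * f x) * (1 * q x + (- s) * f x) \<partial>M)\<^sup>2 \<le>
        (\<integral>x. (1 * h x + (- (c * a)) * f x)\<^sup>2 \<partial>M) * (\<integral>x. (1 * q x + (- s) * f x)\<^sup>2 \<partial>M)"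
      using f_meas h_meas q_meas
      by (intro integral_mult_square_le square_integrable_lincomb L2) simp_all
    ultimately have "X\<^sup>2 \<le> (V * (1 - c\<^sup>2)) * (\<sigma>\<^sup>2 - s\<^sup>2)"
      unfolding X_def by simp
    then have "sqrt (X\<^sup>2) \<le> sqrt ((V * (1 - c\<^sup>2)) * (\<sigma>\<^sup>2 - s\<^sup>2))" by (rule real_sqrt_le_mono)
    then have "\<bar>X\<bar> \<le> a * (sqrt (1 - c\<^sup>2) * sqrt (\<sigma>\<^sup>2 - s\<^sup>2))"
      by (simp add: a_def real_sqrt_mult mult.assoc)
    then have "X \<le> a * (sqrt (1 - c\<^sup>2) * sqrt (\<sigma>\<^sup>2 - s\<^sup>2))" by linarith
    then show ?thesis unfolding X by (simp add: profile_def algebra_simps)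
  qed
  ultimately show ?thesis
    using profile_le_optimal[OF c \<open>0 < \<sigma>\<close> \<open>0 \<le> \<epsilon>\<close>] mult_left_mono[OF _ \<open>0 \<le> a\<close>]
    by (fastforce simp: a_def)
qed

text \<open>In coordinates \<open>u = \<integral>q f\<close>, \<open>w = \<beta> \<surd>V \<surd>(1 - c\<^sup>2)\<close> of \<open>q = \<alpha> f + \<beta> h\<close> the three functionals
  become \<open>u\<^sup>2 + w\<^sup>2\<close>, \<open>(u - \<sigma>)\<^sup>2 + w\<^sup>2\<close> and \<open>\<surd>V (c u + \<surd>(1 - c\<^sup>2) w)\<close>; the optimum is
  \<open>u = optimal_cov c \<sigma> \<epsilon>\<close>, \<open>w = \<surd>(\<sigma>\<^sup>2 - u\<^sup>2)\<close>.\<close>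
lemma lincomb_attains_profile:
  assumes "0 < \<sigma>" "0 \<le> \<epsilon>"
  obtains \<alpha> \<beta> where "0 \<le> \<alpha>" "0 \<le> \<beta>"
    "(\<integral>x. (\<alpha> * f x + \<beta> * h x)\<^sup>2 \<partial>M) = \<sigma>\<^sup>2"
    "(\<integral>x. (\<alpha> * f x + \<beta> * h x - \<sigma> * f x)\<^sup>2 \<partial>M) \<le> \<epsilon>"
    "(\<integral>x. h x * (\<alpha> * f x + \<beta> * h x) \<partial>M) = sqrt V * profile c \<sigma> (optimal_cov c \<sigma> \<epsilon>)"
proof -
  define a k where "a = sqrt V" and "k = sqrt (1 - c\<^sup>2)"
  define u t where "u = optimal_cov c \<sigma> \<epsilon>" and "t = sqrt (\<sigma>\<^sup>2 - u\<^sup>2)"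
  have "0 \<le> V" using h_sq[symmetric] by simp
  then have "0 \<le> a" "a\<^sup>2 = V" by (simp_all add: a_def)
  have "c\<^sup>2 \<le> 1" using c by (simp add: power_le_one)
  then have "0 \<le> k" "k\<^sup>2 = 1 - c\<^sup>2" by (simp_all add: k_def)
  have u: "\<sigma> * c \<le> u" "\<sigma> - \<epsilon> / (2 * \<sigma>) \<le> u" "u\<^sup>2 \<le> \<sigma>\<^sup>2"
    using optimal_cov_ge[OF c assms] optimal_cov_square_le[OF c assms] by (simp_all add: u_def)
  then have "0 \<le> t" "t\<^sup>2 = \<sigma>\<^sup>2 - u\<^sup>2" by (simp_all add: t_def)
  have h_f: "(\<integral>x. h x * f x \<partial>M) = c * a" using f_h by (simp add: a_def mult.commute)
  have square: "(\<integral>x. (\<alpha> * f x + \<beta> * h x)\<^sup>2 \<partial>M) = (\<alpha> + \<beta> * c * a)\<^sup>2 + (\<beta> * a * k)\<^sup>2" for \<alpha> \<beta>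
  proof -
    have "(\<integral>x. (\<alpha> * f x + \<beta> * h x)\<^sup>2 \<partial>M) = \<alpha>\<^sup>2 + 2 * \<alpha> * \<beta> * (c * a) + \<beta>\<^sup>2 * a\<^sup>2"
      unfolding integral_lincomb_square[OF f_meas h_meas f_sq_int h_sq_int] f_sq f_h h_sq
      using \<open>a\<^sup>2 = V\<close> by (simp add: a_def)
    also have "\<dots> = (\<alpha> + \<beta> * c * a)\<^sup>2 + \<beta>\<^sup>2 * a\<^sup>2 * (1 - c\<^sup>2)"
      by (simp add: power2_eq_square algebra_simps)
    finally show ?thesis using \<open>k\<^sup>2 = 1 - c\<^sup>2\<close> by (simp add: power_mult_distrib)
  qed
  have dist: "(\<integral>x. (\<alpha> * f x + \<beta> * h x - \<sigma> * f x)\<^sup>2 \<partial>M) = (\<alpha> + \<beta> * c * a - \<sigma>)\<^sup>2 + (\<beta> * a * k)\<^sup>2"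
    for \<alpha> \<beta>
    using square[of "\<alpha> - \<sigma>" \<beta>] by (simp add: algebra_simps)
  have objective: "(\<integral>x. h x * (\<alpha> * f x + \<beta> * h x) \<partial>M) = a * (c * (\<alpha> + \<beta> * c * a) + k * (\<beta> * a * k))"
    for \<alpha> \<beta>
  proof -
    have "(\<integral>x. h x * (\<alpha> * f x + \<beta> * h x) \<partial>M) = \<alpha> * (c * a) + \<beta> * a\<^sup>2"
      using integral_lincomb_mult[OF h_meas h_meas f_meas h_meas h_sq_int h_sq_int f_sq_int h_sq_int,
          of 1 0 \<alpha> \<beta>] h_f h_sq \<open>a\<^sup>2 = V\<close> by (simp add: power2_eq_square)
    also have "\<dots> = \<alpha> * (c * a) + \<beta> * a\<^sup>2 * (c\<^sup>2 + k\<^sup>2)" using \<open>k\<^sup>2 = 1 - c\<^sup>2\<close> by simp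
    also have "\<dots> = a * (c * (\<alpha> + \<beta> * c * a) + k * (\<beta> * a * k))"
      by (simp add: power2_eq_square algebra_simps)
    finally show ?thesis .
  qed
  have budget: "(u - \<sigma>)\<^sup>2 + t\<^sup>2 \<le> \<epsilon>"
    using u(2) \<open>t\<^sup>2 = \<sigma>\<^sup>2 - u\<^sup>2\<close> \<open>0 < \<sigma>\<close> by (simp add: power2_eq_square field_simps)
  have profile_u: "profile c \<sigma> (optimal_cov c \<sigma> \<epsilon>) = c * u + k * t"
    by (simp add: profile_def k_def t_def u_def)
  show ?thesis
  proof (cases "a > 0 \<and> k > 0")
    case True
    define \<beta> where "\<beta> = t / (a * k)"
    define \<alpha> where "\<alpha> = u - \<beta> * c * a"
    have coords: "\<alpha> + \<beta> * c * a = u" "\<beta> * a * k = t"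
      using True by (simp_all add: \<alpha>_def \<beta>_def)
    have "c * t \<le> k * u"
      using mult_sqrt_le_if_mult_le[OF c _ u(1,3)] \<open>0 < \<sigma>\<close> by (simp add: k_def t_def)
    then have "\<beta> * c * a \<le> u"
      using True by (simp add: \<beta>_def field_simps)
    show ?thesis
    proof (rule that)
      show "0 \<le> \<alpha>" using \<open>\<beta> * c * a \<le> u\<close> by (simp add: \<alpha>_def)
      show "0 \<le> \<beta>" using True \<open>0 \<le> t\<close> by (simp add: \<beta>_def)
      show "(\<integral>x. (\<alpha> * f x + \<beta> * h x)\<^sup>2 \<partial>M) = \<sigma>\<^sup>2"
        unfolding square coords using \<open>t\<^sup>2 = \<sigma>\<^sup>2 - u\<^sup>2\<close> by simp
      show "(\<integral>x. (\<alpha> * f x + \<beta> * h x - \<sigma> * f x)\<^sup>2 \<partial>M) \<le> \<epsilon>"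
        unfolding dist coords by (rule budget)
      show "(\<integral>x. h x * (\<alpha> * f x + \<beta> * h x) \<partial>M) = sqrt V * profile c \<sigma> (optimal_cov c \<sigma> \<epsilon>)"
        unfolding a_def[symmetric] objective coords profile_u ..
    qed
  next
    case False
    then have "a = 0 \<or> k = 0" using \<open>0 \<le> a\<close> \<open>0 \<le> k\<close> by auto
    moreover have "u = \<sigma> \<and> t = 0" if "k = 0"
    proof -
      from that \<open>k\<^sup>2 = 1 - c\<^sup>2\<close> c have "c = 1" by (simp add: power2_eq_1_iff)
      then show ?thesis
        using optimal_cov_le[OF c assms] \<open>0 < \<sigma>\<close> by (simp add: u_def t_def optimal_cov_def)
    qed
    ultimately have "a * (c * \<sigma> + k * 0) = a * (c * u + k * t)"
      by (elim disjE) simp_all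
    show ?thesis
    proof (rule that[of \<sigma> 0])
      show "(\<integral>x. (\<sigma> * f x + 0 * h x)\<^sup>2 \<partial>M) = \<sigma>\<^sup>2" unfolding square by simp
      show "(\<integral>x. (\<sigma> * f x + 0 * h x - \<sigma> * f x)\<^sup>2 \<partial>M) \<le> \<epsilon>" using assms by simp
      show "(\<integral>x. h x * (\<sigma> * f x + 0 * h x) \<partial>M) = sqrt V * profile c \<sigma> (optimal_cov c \<sigma> \<epsilon>)"
        unfolding a_def[symmetric] objective profile_u using \<open>a * (c * \<sigma> + k * 0) = _\<close> by simp
    qed (use assms in simp_all)
  qed
qed

end

section \<open>Return vectors with prescribed moments\<close>

lemma Mset_loss_moments:
  fixes GR :: "(real^'n) measure"
  assumes "GR \<in> Mset mu Sig"
  shows "real_distribution (distr GR borel (\<lambda>r. - (x \<bullet> r)))"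
    and "(\<lambda>r. - (x \<bullet> r)) \<in> borel_measurable GR"
    and "integrable GR (\<lambda>r. (- (x \<bullet> r))\<^sup>2)"
    and "(\<integral>r. - (x \<bullet> r) \<partial>GR) = - (x \<bullet> mu)"
    and "(\<integral>r. (- (x \<bullet> r) + x \<bullet> mu)\<^sup>2 \<partial>GR) = x \<bullet> (Sig *v x)"
proof -
  from assms have sets: "sets GR = sets borel" and sq: "\<And>i. integrable GR (\<lambda>r. (r $ i)\<^sup>2)"
    and mean: "\<And>i. (\<integral>r. r $ i \<partial>GR) = mu $ i"
    and cov: "\<And>i j. (\<integral>r. (r $ i - mu $ i) * (r $ j - mu $ j) \<partial>GR) = Sig $ i $ j"
    and "prob_space GR"
    unfolding Mset_def by auto
  interpret prob_space GR by fact
  have meas: "(\<lambda>r. r $ i) \<in> borel_measurable GR" for i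
    unfolding measurable_cong_sets[OF sets refl] by simp
  have int: "integrable GR (\<lambda>r. r $ i)" for i
    using square_integrable_imp_integrable[OF meas sq] .
  have "integrable GR (\<lambda>r. (r $ i + - mu $ i)\<^sup>2)" for i
    using meas sq by (rule square_integrable_add_const)
  then have int_centered: "integrable GR (\<lambda>r. (r $ i - mu $ i) * (r $ j - mu $ j))" for i j
    using meas by (intro integrable_mult_if_square_integrable) simp_all
  have loss: "- (x \<bullet> r) = - (\<Sum>i\<in>UNIV. x $ i * r $ i)" for r :: "real^'n"
    by (simp add: inner_vec_def)
  show L_meas: "(\<lambda>r. - (x \<bullet> r)) \<in> borel_measurable GR"
    unfolding loss using meas by measurable
  then show "real_distribution (distr GR borel (\<lambda>r. - (x \<bullet> r)))" by simp
  show "(\<integral>r. - (x \<bullet> r) \<partial>GR) = - (x \<bullet> mu)"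
    unfolding loss using int mean by (simp add: integral_sum inner_vec_def)
  have centered: "(- (x \<bullet> r) + x \<bullet> mu)\<^sup>2 =
      (\<Sum>i\<in>UNIV. \<Sum>j\<in>UNIV. x $ i * x $ j * ((r $ i - mu $ i) * (r $ j - mu $ j)))" for r
  proof -
    have "- (x \<bullet> r) + x \<bullet> mu = - (\<Sum>i\<in>UNIV. x $ i * (r $ i - mu $ i))"
      by (simp add: inner_vec_def sum_subtractf right_diff_distrib)
    then show ?thesis by (simp add: power2_eq_square sum_product ac_simps)
  qed
  show "(\<integral>r. (- (x \<bullet> r) + x \<bullet> mu)\<^sup>2 \<partial>GR) = x \<bullet> (Sig *v x)"
    unfolding centered using int_centered cov
    by (simp add: integral_sum inner_vec_def matrix_vector_mult_def sum_distrib_left ac_simps)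
  have "integrable GR (\<lambda>r. (- (x \<bullet> r) + x \<bullet> mu)\<^sup>2)"
    unfolding centered using int_centered by simp
  moreover have "(\<lambda>r. - (x \<bullet> r) + x \<bullet> mu) \<in> borel_measurable GR" using L_meas by simp
  ultimately show "integrable GR (\<lambda>r. (- (x \<bullet> r))\<^sup>2)"
    using square_integrable_add_const[of "\<lambda>r. - (x \<bullet> r) + x \<bullet> mu" "- (x \<bullet> mu)"] by simp
qed

lemma symmetric_inner_matrix_commute:
  fixes C :: "real^'n^'n"
  assumes "transpose C = C"
  shows "x \<bullet> (C *v y) = y \<bullet> (C *v x)"
  by (metis assms dot_lmul_matrix inner_commute transpose_matrix_vector)

lemma quadratic_form_diff:
  fixes C :: "real^'n^'n"
  assumes "transpose C = C"
  shows "(v - t *\<^sub>R y) \<bullet> (C *v (v - t *\<^sub>R y)) =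
    v \<bullet> (C *v v) - 2 * t * (v \<bullet> (C *v y)) + t\<^sup>2 * (y \<bullet> (C *v y))"
  using symmetric_inner_matrix_commute[OF assms, of y v]
  by (simp add: algebra_simps inner_diff_left inner_diff_right power2_eq_square)

lemma inner_axis_matrix_axis: "axis i 1 \<bullet> (C *v axis j 1) = C $ i $ j" for C :: "real^'n^'n"
  by (simp add: matrix_vector_mult_basis inner_axis' column_def)

lemma inner_outer_matrix: "v \<bullet> ((\<chi> i j. w $ i * w $ j) *v v) = (v \<bullet> w)\<^sup>2" for v w :: "real^'n"
  by (simp add: inner_vec_def matrix_vector_mult_def power2_eq_square sum_product sum_distrib_left ac_simps)

text \<open>Symmetric Gaussian elimination: subtracting the rank-one matrix built from a column
  with positive diagonal entry keeps the matrix positive semidefinite and clears that row.\<close>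
lemma psd_rank_one_sum_on:
  fixes S :: "'n::finite set" and C :: "real^'n^'n"
  assumes "finite S"
  shows "transpose C = C \<Longrightarrow> (\<And>v. 0 \<le> v \<bullet> (C *v v)) \<Longrightarrow> (\<And>i j. i \<notin> S \<Longrightarrow> C $ i $ j = 0) \<Longrightarrow>
    \<exists>vs. \<forall>i j. C $ i $ j = (\<Sum>v\<leftarrow>vs. v $ i * v $ j)"
  using assms
proof (induction S arbitrary: C rule: finite_induct)
  case empty
  then show ?case by (intro exI[of _ "[]"]) simp
next
  case (insert i0 S)
  have sym: "C $ i $ j = C $ j $ i" for i j
    using insert.prems(1) by (metis transpose_def vec_lambda_beta)
  define d where "d = C $ i0 $ i0"
  have "0 \<le> d" using insert.prems(2)[of "axis i0 1"] by (simp add: d_def inner_axis_matrix_axis)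
  show ?case
  proof (cases "d = 0")
    case True
    have column_zero: "C $ k $ i0 = 0" for k
    proof (rule ccontr)
      assume "C $ k $ i0 \<noteq> 0"
      define t where "t = (C $ k $ k + 1) / (2 * C $ k $ i0)"
      have "(axis k 1 - t *\<^sub>R axis i0 1) \<bullet> (C *v (axis k 1 - t *\<^sub>R axis i0 1)) = C $ k $ k - 2 * t * C $ k $ i0"
        using True by (simp add: quadratic_form_diff[OF insert.prems(1)] inner_axis_matrix_axis d_def)
      also have "\<dots> = -1" using \<open>C $ k $ i0 \<noteq> 0\<close> by (simp add: t_def field_simps)
      finally show False using insert.prems(2) by (metis neg_0_le_iff_le not_one_le_zero)
    qed
    have "C $ i $ j = 0" if "i \<notin> S" for i j
      using insert.prems(3)[of i] column_zero[of j] sym[of i0 j] that by (cases "i = i0") auto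
    then show ?thesis using insert.IH insert.prems(1,2) by blast
  next
    case False
    with \<open>0 \<le> d\<close> have "0 < d" by simp
    define w :: "real^'n" where "w = (\<chi> j. C $ j $ i0 / sqrt d)"
    define C' :: "real^'n^'n" where "C' = C - (\<chi> i j. w $ i * w $ j)"
    have C'_entry: "C' $ i $ j = C $ i $ j - C $ i $ i0 * C $ j $ i0 / d" for i j
      using \<open>0 < d\<close> by (simp add: C'_def w_def real_sqrt_mult[symmetric])
    have "transpose C' = C'"
      by (simp add: vec_eq_iff transpose_def C'_entry sym mult.commute)
    moreover have "0 \<le> v \<bullet> (C' *v v)" for v
    proof -
      define p where "p = v \<bullet> (C *v axis i0 1)"
      have "v \<bullet> w = p / sqrt d"
        by (simp add: p_def w_def inner_vec_def matrix_vector_mult_basis column_def sum_divide_distrib)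
      then have "v \<bullet> (C' *v v) = v \<bullet> (C *v v) - p\<^sup>2 / d"
        using \<open>0 < d\<close> by (simp add: C'_def matrix_vector_mult_diff_rdistrib inner_diff_right
            inner_outer_matrix power_divide)
      also have "\<dots> = (v - (p / d) *\<^sub>R axis i0 1) \<bullet> (C *v (v - (p / d) *\<^sub>R axis i0 1))"
        using \<open>0 < d\<close> by (simp add: quadratic_form_diff[OF insert.prems(1)] inner_axis_matrix_axis
            d_def[symmetric] p_def power2_eq_square field_simps)
      finally show ?thesis using insert.prems(2) by simp
    qed
    moreover have "C' $ i $ j = 0" if "i \<notin> S" for i j
      using insert.prems(3)[of i] insert.prems(3)[of i i0] that \<open>0 < d\<close>
      by (cases "i = i0") (auto simp: C'_entry d_def sym[of j i0])
    ultimately obtain vs where "\<forall>i j. C' $ i $ j = (\<Sum>v\<leftarrow>vs. v $ i * v $ j)"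
      using insert.IH by blast
    moreover have "C $ i $ j = w $ i * w $ j + C' $ i $ j" for i j by (simp add: C'_def)
    ultimately have "\<forall>i j. C $ i $ j = (\<Sum>v\<leftarrow>w # vs. v $ i * v $ j)" by simp
    then show ?thesis by blast
  qed
qed

text \<open>A random vector uniform on the points \<open>\<plusminus>\<surd>N v\<^sub>k\<close> has mean zero and covariance \<open>C\<close>
  when \<open>C = (\<Sum>k<N. v\<^sub>k v\<^sub>k\<^sup>T)\<close>; padding the rank-one decomposition with a zero vector makes it
  nonempty.\<close>
lemma psd_discrete_covariance:
  fixes C :: "real^'n^'n"
  assumes sym: "transpose C = C" and psd: "\<And>v. 0 \<le> v \<bullet> (C *v v)"
  obtains A :: "(nat \<times> bool) set" and W :: "nat \<times> bool \<Rightarrow> real^'n"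
  where "finite A" "A \<noteq> {}" "\<And>i. (\<Sum>a\<in>A. W a $ i) = 0"
    "\<And>i j. (\<Sum>a\<in>A. W a $ i * W a $ j) = card A * C $ i $ j"
    "\<And>a x. a \<in> A \<Longrightarrow> x \<bullet> (C *v x) = 0 \<Longrightarrow> x \<bullet> W a = 0"
proof -
  obtain vs where vs: "\<And>i j. C $ i $ j = (\<Sum>v\<leftarrow>vs. v $ i * v $ j)"
    using psd_rank_one_sum_on[of UNIV C] sym psd by auto
  define N where "N = Suc (length vs)"
  define V where "V k = (0 # vs) ! k" for k
  have C_eq: "C $ i $ j = (\<Sum>k<N. V k $ i * V k $ j)" for i j
    unfolding vs N_def V_def sum_list_sum_nth sum.lessThan_Suc_shift
    by (simp add: atLeast0LessThan)
  define A where "A = {..<N} \<times> (UNIV :: bool set)"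
  define W where "W a = ((if snd a then 1 else -1) * sqrt (real N)) *\<^sub>R V (fst a)" for a
  have sum_A: "(\<Sum>a\<in>A. F a) = (\<Sum>k<N. F (k, True) + F (k, False))" for F :: "nat \<times> bool \<Rightarrow> real"
  proof -
    have "(\<Sum>a\<in>A. F a) = (\<Sum>k<N. \<Sum>b\<in>UNIV. F (k, b))"
      unfolding A_def using sum.cartesian_product[of "\<lambda>k b. F (k, b)" "UNIV :: bool set" "{..<N}"] by simp
    then show ?thesis by (simp add: UNIV_bool add.commute)
  qed
  have card_A: "card A = 2 * N" by (simp add: A_def card_cartesian_product)
  show ?thesis
  proof (rule that)
    show "finite A" by (simp add: A_def)
    have "(0, True) \<in> A" by (simp add: A_def N_def)
    then show "A \<noteq> {}" by blast
    show "(\<Sum>a\<in>A. W a $ i) = 0" for i by (simp add: sum_A W_def)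
    have sqrt_N: "sqrt (real N) * (sqrt (real N) * z) = real N * z" for z
      by (simp add: mult.assoc[symmetric])
    show "(\<Sum>a\<in>A. W a $ i * W a $ j) = card A * C $ i $ j" for i j
      by (simp add: sum_A W_def card_A C_eq sum_distrib_left algebra_simps sqrt_N)
    fix a x assume "a \<in> A" "x \<bullet> (C *v x) = 0"
    have "x \<bullet> (C *v x) = (\<Sum>k<N. (x \<bullet> V k)\<^sup>2)"
      by (simp add: inner_vec_def matrix_vector_mult_def C_eq power2_eq_square sum_product
          sum_distrib_left ac_simps sum.swap[of _ "{..<N}"])
    then have "(x \<bullet> V (fst a))\<^sup>2 = 0"
      using \<open>x \<bullet> (C *v x) = 0\<close> \<open>a \<in> A\<close> sum_nonneg_eq_0_iff[of "{..<N}" "\<lambda>k. (x \<bullet> V k)\<^sup>2"]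
      by (auto simp: A_def)
    then show "x \<bullet> W a = 0" by (simp add: W_def)
  qed
qed

lemma (in prob_space) integral_pair_uniform_count_measure:
  fixes F :: "'a \<times> 'b \<Rightarrow> real"
  assumes A: "finite A" "A \<noteq> {}"
    and F_meas: "F \<in> borel_measurable (M \<Otimes>\<^sub>M uniform_count_measure A)"
    and F_int: "\<And>a. a \<in> A \<Longrightarrow> integrable M (\<lambda>u. F (u, a))"
  shows "integrable (M \<Otimes>\<^sub>M uniform_count_measure A) F"
    and "integral\<^sup>L (M \<Otimes>\<^sub>M uniform_count_measure A) F = (\<Sum>a\<in>A. \<integral>u. F (u, a) \<partial>M) / card A"
proof -
  interpret U: prob_space "uniform_count_measure A" by (rule prob_space_uniform_count_measure[OF A])
  interpret pair_sigma_finite M "uniform_count_measure A" ..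
  have inner: "(\<integral>a. G a \<partial>uniform_count_measure A) = (\<Sum>a\<in>A. G a) / card A" for G :: "'b \<Rightarrow> real"
    by (rule integral_uniform_count_measure[OF A(1)])
  show int: "integrable (M \<Otimes>\<^sub>M uniform_count_measure A) F"
  proof (rule Fubini_integrable[OF F_meas])
    show "integrable M (\<lambda>u. \<integral>a. norm (F (u, a)) \<partial>uniform_count_measure A)"
      unfolding inner using F_int A by (intro integrable_divide integrable_sum) auto
    show "AE u in M. integrable (uniform_count_measure A) (\<lambda>a. F (u, a))"
      using A unfolding uniform_count_measure_def by (intro AE_I2 integrable_point_measure_finite)
  qed
  have "integral\<^sup>L (M \<Otimes>\<^sub>M uniform_count_measure A) F = (\<integral>u. (\<integral>a. F (u, a) \<partial>uniform_count_measure A) \<partial>M)"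
    by (rule integral_fst'[OF int, symmetric])
  also have "\<dots> = (\<Sum>a\<in>A. \<integral>u. F (u, a) \<partial>M) / card A"
    unfolding inner using F_int by (simp add: integral_sum)
  finally show "integral\<^sup>L (M \<Otimes>\<^sub>M uniform_count_measure A) F = (\<Sum>a\<in>A. \<integral>u. F (u, a) \<partial>M) / card A" .
qed

lemma (in prob_space) affine_moments:
  fixes Z :: "'a \<Rightarrow> real"
  assumes "Z \<in> borel_measurable M" "integrable M (\<lambda>u. (Z u)\<^sup>2)"
    and "expectation Z = 0" "expectation (\<lambda>u. (Z u)\<^sup>2) = s"
  shows "integrable M (\<lambda>u. a + b * Z u)" "expectation (\<lambda>u. a + b * Z u) = a"
    and "integrable M (\<lambda>u. (a + b * Z u) * (c + d * Z u))"
    and "expectation (\<lambda>u. (a + b * Z u) * (c + d * Z u)) = a * c + b * d * s"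
proof -
  have "integrable M Z" by (rule square_integrable_imp_integrable[OF assms(1,2)])
  moreover have "(\<lambda>u. (a + b * Z u) * (c + d * Z u)) = (\<lambda>u. a * c + (a * d + b * c) * Z u + b * d * (Z u)\<^sup>2)"
    by (simp add: power2_eq_square algebra_simps)
  ultimately show "integrable M (\<lambda>u. a + b * Z u)" "expectation (\<lambda>u. a + b * Z u) = a"
    "integrable M (\<lambda>u. (a + b * Z u) * (c + d * Z u))"
    "expectation (\<lambda>u. (a + b * Z u) * (c + d * Z u)) = a * c + b * d * s"
    using assms prob_space by simp_all
qed

text \<open>The vector \<open>R = \<mu> - (Y + x\<^sup>T\<mu>) \<Sigma>x / (x\<^sup>T\<Sigma>x) + W\<close>, with \<open>W\<close> independent of \<open>Y\<close> and
  carrying the residual covariance \<open>\<Sigma> - \<Sigma>x (\<Sigma>x)\<^sup>T / (x\<^sup>T\<Sigma>x)\<close>, whose kernel contains \<open>x\<close>.\<close>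
lemma Mset_with_loss_distribution:
  fixes mu x :: "real^'n" and Sig :: "real^'n^'n" and Y :: "real \<Rightarrow> real"
  assumes sym: "transpose Sig = Sig" and psd: "\<forall>v. 0 \<le> v \<bullet> (Sig *v v)"
    and pos: "0 < x \<bullet> (Sig *v x)"
    and Y_meas: "Y \<in> borel_measurable uniform01" and Y_sq_int: "integrable uniform01 (\<lambda>u. (Y u)\<^sup>2)"
    and Y_mean: "integral\<^sup>L uniform01 Y = - (x \<bullet> mu)"
    and Y_var: "(\<integral>u. (Y u + x \<bullet> mu)\<^sup>2 \<partial>uniform01) = x \<bullet> (Sig *v x)"
  obtains GR where "GR \<in> Mset mu Sig" "distr GR borel (\<lambda>r. - (x \<bullet> r)) = distr uniform01 borel Y"
proof -
  define s2 sx where "s2 = x \<bullet> (Sig *v x)" and "sx = Sig *v x"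
  define w where "w = (1 / sqrt s2) *\<^sub>R sx"
  define C :: "real^'n^'n" where "C = Sig - (\<chi> i j. w $ i * w $ j)"
  have C_entry: "C $ i $ j = Sig $ i $ j - sx $ i * sx $ j / s2" for i j
    using pos by (simp add: C_def w_def s2_def real_sqrt_mult[symmetric])
  have sym_entry: "Sig $ i $ j = Sig $ j $ i" for i j
    using sym by (metis transpose_def vec_lambda_beta)
  have C_sym: "transpose C = C"
    by (simp add: vec_eq_iff transpose_def C_entry sym_entry mult.commute)
  have C_quad: "v \<bullet> (C *v v) = v \<bullet> (Sig *v v) - (v \<bullet> sx)\<^sup>2 / s2" for v
  proof -
    have "v \<bullet> (C *v v) = v \<bullet> (Sig *v v) - (v \<bullet> w)\<^sup>2"
      by (simp only: C_def matrix_vector_mult_diff_rdistrib inner_diff_right inner_outer_matrix)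
    also have "(v \<bullet> w)\<^sup>2 = (v \<bullet> sx)\<^sup>2 / s2"
      using pos by (simp add: w_def power_mult_distrib power_divide s2_def)
    finally show ?thesis .
  qed
  have C_psd: "0 \<le> v \<bullet> (C *v v)" for v
  proof -
    have "v \<bullet> (C *v v) = (v - ((v \<bullet> sx) / s2) *\<^sub>R x) \<bullet> (Sig *v (v - ((v \<bullet> sx) / s2) *\<^sub>R x))"
      using pos by (simp add: C_quad quadratic_form_diff[OF sym] s2_def sx_def power2_eq_square field_simps)
    then show ?thesis using psd by simp
  qed
  have "x \<bullet> (C *v x) = 0"
    using pos by (simp add: C_quad s2_def sx_def power2_eq_square)
  obtain A :: "(nat \<times> bool) set" and W where A: "finite A" "A \<noteq> {}"
    and W_mean: "\<And>i. (\<Sum>a\<in>A. W a $ i) = 0"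
    and W_cov: "\<And>i j. (\<Sum>a\<in>A. W a $ i * W a $ j) = card A * C $ i $ j"
    and W_perp: "\<And>a v. a \<in> A \<Longrightarrow> v \<bullet> (C *v v) = 0 \<Longrightarrow> v \<bullet> W a = 0"
    using psd_discrete_covariance[OF C_sym C_psd] by blast
  define M0 where "M0 = uniform01 \<Otimes>\<^sub>M uniform_count_measure A"
  interpret P: prob_space "uniform_count_measure A" by (rule prob_space_uniform_count_measure[OF A])
  interpret UP: pair_prob_space uniform01 "uniform_count_measure A" ..
  define Z where "Z u = Y u + x \<bullet> mu" for u
  define e where "e = (1 / s2) *\<^sub>R sx"
  define R where "R p = mu - Z (fst p) *\<^sub>R e + W (snd p)" for p
  have Z_meas: "Z \<in> borel_measurable uniform01" using Y_meas by (simp add: Z_def[abs_def])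
  have Z: "integrable uniform01 (\<lambda>u. (Z u)\<^sup>2)" "integral\<^sup>L uniform01 Z = 0"
    "(\<integral>u. (Z u)\<^sup>2 \<partial>uniform01) = s2"
    using uniform01.square_integrable_add_const[OF Y_meas Y_sq_int] uniform01.square_integrable_imp_integrable[OF Y_meas Y_sq_int]
      Y_mean Y_var by (simp_all add: Z_def[abs_def] s2_def)
  note Z_moments = uniform01.affine_moments[OF Z_meas Z]
  have W_meas: "(\<lambda>p. W (snd p)) \<in> borel_measurable M0"
    unfolding M0_def
    by (rule measurable_compose[OF measurable_snd])
      (simp add: measurable_cong_sets[OF sets_uniform_count_measure_count_space refl])
  have R_meas: "R \<in> borel_measurable M0"
    unfolding R_def[abs_def] M0_def using W_meas Z_meas unfolding M0_def by measurable
  define GR where "GR = distr M0 borel R"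
  have R_coord: "R (u, a) $ i = (mu $ i + W a $ i) + (- e $ i) * Z u"
    and R_centered: "R (u, a) $ i - mu $ i = W a $ i + (- e $ i) * Z u" for u a i
    by (simp_all add: R_def)
  have integrals: "integrable GR h" "integral\<^sup>L GR h = (\<Sum>a\<in>A. \<integral>u. h (R (u, a)) \<partial>uniform01) / card A"
    if "h \<in> borel_measurable borel" "\<And>a. integrable uniform01 (\<lambda>u. h (R (u, a)))" for h :: "real^'n \<Rightarrow> real"
    using uniform01.integral_pair_uniform_count_measure[OF A measurable_compose[OF R_meas[unfolded M0_def] that(1)]]
      integrable_distr_eq[OF R_meas that(1)] integral_distr[OF R_meas that(1)] that(2)
    by (simp_all add: GR_def M0_def)
  have "GR \<in> Mset mu Sig"
    unfolding Mset_def
  proof (intro CollectI conjI allI)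
    show "prob_space GR" unfolding GR_def M0_def
      by (rule UP.prob_space_distr) (use R_meas in \<open>simp add: M0_def\<close>)
    show "sets GR = sets borel" by (simp add: GR_def)
    fix i j
    show "integrable GR (\<lambda>r. (r $ i)\<^sup>2)"
      by (rule integrals(1)) (simp, unfold power2_eq_square R_coord, rule Z_moments(3))
    have "(\<integral>r. r $ i \<partial>GR) = (\<Sum>a\<in>A. \<integral>u. R (u, a) $ i \<partial>uniform01) / card A"
      by (rule integrals(2)) (simp, unfold R_coord, rule Z_moments(1))
    also have "\<dots> = (\<Sum>a\<in>A. mu $ i + W a $ i) / card A"
      unfolding R_coord Z_moments(2) ..
    also have "\<dots> = mu $ i" using A W_mean by (simp add: sum.distrib)
    finally show "(\<integral>r. r $ i \<partial>GR) = mu $ i" .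
    have "(\<integral>r. (r $ i - mu $ i) * (r $ j - mu $ j) \<partial>GR) =
        (\<Sum>a\<in>A. \<integral>u. (R (u, a) $ i - mu $ i) * (R (u, a) $ j - mu $ j) \<partial>uniform01) / card A"
      by (rule integrals(2)) (simp, unfold R_centered, rule Z_moments(3))
    also have "\<dots> = (\<Sum>a\<in>A. W a $ i * W a $ j + e $ i * e $ j * s2) / card A"
      unfolding R_centered Z_moments(4) by simp
    also have "\<dots> = C $ i $ j + e $ i * e $ j * s2"
      using A by (simp add: sum.distrib W_cov card_gt_0_iff field_simps)
    also have "\<dots> = Sig $ i $ j"
      using pos by (simp add: C_entry e_def s2_def power2_eq_square field_simps)
    finally show "(\<integral>r. (r $ i - mu $ i) * (r $ j - mu $ j) \<partial>GR) = Sig $ i $ j" .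
  qed
  moreover have "distr GR borel (\<lambda>r. - (x \<bullet> r)) = distr uniform01 borel Y"
  proof -
    have "- (x \<bullet> R p) = Y (fst p)" if "p \<in> space M0" for p
    proof -
      have "snd p \<in> A" using that by (auto simp: M0_def space_pair_measure space_uniform_count_measure)
      then show ?thesis
        using pos W_perp[OF _ \<open>x \<bullet> (C *v x) = 0\<close>]
        by (simp add: R_def Z_def e_def sx_def s2_def inner_diff_right inner_add_right)
    qed
    then have "distr M0 borel ((\<lambda>r. - (x \<bullet> r)) \<circ> R) = distr M0 borel (Y \<circ> fst)"
      by (intro distr_cong) simp_all
    moreover have "distr GR borel (\<lambda>r. - (x \<bullet> r)) = distr M0 borel ((\<lambda>r. - (x \<bullet> r)) \<circ> R)"
      unfolding GR_def by (rule distr_distr) (simp_all add: R_meas)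
    ultimately have "distr GR borel (\<lambda>r. - (x \<bullet> r)) = distr M0 borel (Y \<circ> fst)" by simp
    also have "\<dots> = distr (distr M0 uniform01 fst) borel Y"
      using Y_meas by (subst distr_distr) (simp_all add: M0_def)
    also have "distr M0 uniform01 fst = uniform01"
      unfolding M0_def by (rule P.distr_pair_fst)
    finally show ?thesis .
  qed
  ultimately show ?thesis by (rule that)
qed

lemma sigma_x_square: "0 < sigma_x Sig x \<Longrightarrow> (sigma_x Sig x)\<^sup>2 = x \<bullet> (Sig *v x)"
  unfolding sigma_x_def by (metis real_sqrt_gt_0_iff real_sqrt_pow2 less_imp_le)

section \<open>The worst-case distortion risk\<close>

text \<open>A Chebyshev-type inequality: \<open>f\<close> has mean zero and changes sign once, upwards, at
  \<open>u\<^sub>0\<close>, so \<open>f (\<gamma> - \<gamma> u\<^sub>0) \<ge> 0\<close> pointwise for nondecreasing \<open>\<gamma>\<close>.\<close>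
lemma integral_mult_nonneg_if_sign_change:
  fixes f \<gamma> :: "real \<Rightarrow> real"
  assumes f_int: "integrable uniform01 f" and f\<gamma>_int: "integrable uniform01 (\<lambda>u. f u * \<gamma> u)"
    and f_mean: "integral\<^sup>L uniform01 f = 0"
    and sign: "\<And>u. u \<in> {0<..<1} \<Longrightarrow> f u \<le> 0 \<longleftrightarrow> u \<le> u\<^sub>0"
    and mono: "mono_on {0<..<1} \<gamma>" and nonneg: "\<And>u. u \<in> {0<..<1} \<Longrightarrow> 0 \<le> \<gamma> u"
  shows "0 \<le> (\<integral>u. f u * \<gamma> u \<partial>uniform01)"
proof -
  consider "u\<^sub>0 \<le> 0" | "1 \<le> u\<^sub>0" | "0 < u\<^sub>0 \<and> u\<^sub>0 < 1" by linarith
  then show ?thesis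
  proof cases
    case 1
    then have "0 \<le> f u * \<gamma> u" if "u \<in> space uniform01" for u
      using sign[of u] nonneg[of u] that by simp
    then show ?thesis by (rule Bochner_Integration.integral_nonneg)
  next
    case 2
    then have "AE u in uniform01. 0 \<le> - f u"
      using sign by (intro AE_I2) auto
    then have "AE u in uniform01. - f u = 0"
      using f_int f_mean by (subst integral_nonneg_eq_0_iff_AE[symmetric]) simp_all
    then have "AE u in uniform01. f u * \<gamma> u = 0" by eventually_elim simp
    then show ?thesis by (simp add: integral_eq_zero_AE)
  next
    case 3
    have "0 \<le> f u * (\<gamma> u - \<gamma> u\<^sub>0)" if "u \<in> space uniform01" for u
    proof (cases "u \<le> u\<^sub>0")
      case True
      then have "f u \<le> 0" "\<gamma> u \<le> \<gamma> u\<^sub>0"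
        using sign[of u] that 3 by (auto intro: mono_onD[OF mono])
      then show ?thesis by (simp add: mult_nonpos_nonpos)
    next
      case False
      then have "0 < f u" "\<gamma> u\<^sub>0 \<le> \<gamma> u"
        using sign[of u] that 3 by (auto intro: mono_onD[OF mono])
      then show ?thesis by simp
    qed
    then have "0 \<le> (\<integral>u. f u * (\<gamma> u - \<gamma> u\<^sub>0) \<partial>uniform01)"
      by (rule Bochner_Integration.integral_nonneg)
    also have "\<dots> = (\<integral>u. f u * \<gamma> u \<partial>uniform01)"
      using f_int f\<gamma>_int f_mean by (simp add: right_diff_distrib)
    finally show ?thesis .
  qed
qed

locale distortion_reference = concave_distortion g
  for g :: "real \<Rightarrow> real" +
  fixes MF :: "real measure"
  assumes A1: "A1 g"
    and F_dist: "real_distribution MF"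
    and F_sq_int: "integrable MF (\<lambda>z. z\<^sup>2)"
    and F_mean: "(\<integral>z. z \<partial>MF) = 0"
    and F_var: "(\<integral>z. z\<^sup>2 \<partial>MF) = 1"
begin

abbreviation "f \<equiv> quantile (cdf MF)"
abbreviation "V \<equiv> var01 (gam g)"
abbreviation "c0 \<equiv> corr01 f (gam g)"

text \<open>Since \<open>\<integral>\<gamma> = 1\<close>, the covariances with \<open>\<gamma>(U)\<close> are integrals against \<open>\<gamma> - 1\<close>.\<close>
definition gam_c :: "real \<Rightarrow> real" where
  "gam_c u = gam g u - 1"

lemma f_meas: "f \<in> borel_measurable uniform01" and f_mono: "mono_on {0<..<1} f"
  using borel_measurable_quantile[OF F_dist] mono_on_quantile[OF F_dist] .

lemma f_sq_int: "integrable uniform01 (\<lambda>u. (f u)\<^sup>2)"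
  using integrable_quantile_iff[OF F_dist, of "\<lambda>z. z\<^sup>2"] F_sq_int by simp

lemma f_sq: "(\<integral>u. (f u)\<^sup>2 \<partial>uniform01) = 1"
  using integral_quantile[OF F_dist, of "\<lambda>z. z\<^sup>2"] F_var by simp

lemma f_int: "integrable uniform01 f"
  using uniform01.square_integrable_imp_integrable[OF f_meas f_sq_int] .

lemma f_mean: "integral\<^sup>L uniform01 f = 0"
  using integral_quantile[OF F_dist, of "\<lambda>z. z"] F_mean by simp

lemma gam_sq_int: "integrable uniform01 (\<lambda>u. (gam g u)\<^sup>2)"
  using A1 by (simp add: A1_def set_integrable_iff_uniform01)

lemma gam_int: "integrable uniform01 (gam g)"
  using uniform01.square_integrable_imp_integrable[OF borel_measurable_gam gam_sq_int] .

lemma gam_mean: "integral\<^sup>L uniform01 (gam g) = 1"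
  using integral_gam[OF gam_int] A1 by (simp add: A1_def)

lemma gam_c_meas: "gam_c \<in> borel_measurable uniform01"
  using borel_measurable_gam by (simp add: gam_c_def[abs_def])

lemma mono_on_gam_c: "mono_on {0<..<1} gam_c"
  using mono_on_gam by (simp add: gam_c_def mono_on_def)

lemma gam_c_sq_int: "integrable uniform01 (\<lambda>u. (gam_c u)\<^sup>2)"
  using uniform01.square_integrable_add_const[OF borel_measurable_gam gam_sq_int, of "- 1"]
  by (simp add: gam_c_def)

lemma gam_c_mean: "integral\<^sup>L uniform01 gam_c = 0"
  using gam_int gam_mean by (simp add: gam_c_def[abs_def])

lemma gam_c_sq: "(\<integral>u. (gam_c u)\<^sup>2 \<partial>uniform01) = var01 (gam g)"
proof -
  have "(\<lambda>u. (gam_c u)\<^sup>2) = (\<lambda>u. (gam g u)\<^sup>2 - 2 * gam g u + 1)"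
    by (simp add: gam_c_def power2_eq_square algebra_simps)
  then show ?thesis
    using gam_sq_int gam_int gam_mean by (simp add: var01_def set_integral_eq_uniform01)
qed

lemma integral_f_gam_c: "(\<integral>u. f u * gam_c u \<partial>uniform01) = (\<integral>u. f u * gam g u \<partial>uniform01)"
  and integral_f_gam_nonneg: "0 \<le> (\<integral>u. f u * gam g u \<partial>uniform01)"
proof -
  have int: "integrable uniform01 (\<lambda>u. f u * gam g u)"
    by (rule integrable_mult_if_square_integrable[OF f_meas borel_measurable_gam f_sq_int gam_sq_int])
  then show "(\<integral>u. f u * gam_c u \<partial>uniform01) = (\<integral>u. f u * gam g u \<partial>uniform01)"
    using f_int f_mean by (simp add: gam_c_def right_diff_distrib)
  have "f u \<le> 0 \<longleftrightarrow> u \<le> cdf MF 0" if "u \<in> {0<..<1}" for u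
  proof -
    interpret cdf_distribution MF using F_dist by (simp add: cdf_distribution_def)
    show ?thesis using that pseudoinverse[of u 0] by (simp add: quantile_def)
  qed
  then show "0 \<le> (\<integral>u. f u * gam g u \<partial>uniform01)"
    by (rule integral_mult_nonneg_if_sign_change[OF f_int int f_mean _ mono_on_gam gam_nonneg])
qed

lemma corr_f_gam:
  shows "0 \<le> c0" "c0 \<le> 1" "(\<integral>u. f u * gam_c u \<partial>uniform01) = c0 * sqrt V"
proof -
  define \<kappa> where "\<kappa> = (\<integral>u. f u * gam_c u \<partial>uniform01)"
  have "0 \<le> \<kappa>" unfolding \<kappa>_def integral_f_gam_c by (rule integral_f_gam_nonneg)
  have "0 \<le> V" unfolding gam_c_sq[symmetric] by simp
  have "\<kappa>\<^sup>2 \<le> V"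
    using integral_mult_square_le[OF f_meas gam_c_meas f_sq_int gam_c_sq_int] f_sq gam_c_sq
    by (simp add: \<kappa>_def)
  then have "\<kappa> \<le> sqrt V" using \<open>0 \<le> \<kappa>\<close> by (simp add: real_le_rsqrt)
  have c0: "c0 = \<kappa> / sqrt V"
    unfolding corr01_def cov01_def var01_def set_integral_eq_uniform01 f_sq f_mean
    by (simp add: \<kappa>_def integral_f_gam_c)
  show "0 \<le> c0" unfolding c0 using \<open>0 \<le> \<kappa>\<close> \<open>0 \<le> V\<close> by simp
  show "c0 \<le> 1" unfolding c0 using \<open>\<kappa> \<le> sqrt V\<close> \<open>0 \<le> V\<close> by (simp add: divide_le_eq)
  show "(\<integral>u. f u * gam_c u \<partial>uniform01) = c0 * sqrt V"
    using \<open>\<kappa>\<^sup>2 \<le> V\<close> \<open>0 \<le> V\<close> unfolding c0 \<kappa>_def[symmetric] by (cases "V = 0") simp_all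
qed

lemma integral_gam_mult_shift:
  fixes q :: "real \<Rightarrow> real"
  assumes "q \<in> borel_measurable uniform01" "integrable uniform01 (\<lambda>u. (q u)\<^sup>2)"
    and "integral\<^sup>L uniform01 q = 0"
  shows "(\<integral>u. gam g u * (q u + m) \<partial>uniform01) = (\<integral>u. gam_c u * q u \<partial>uniform01) + m"
proof -
  have "(\<lambda>u. gam g u * (q u + m)) = (\<lambda>u. gam_c u * q u + m * gam g u + q u)"
    by (simp add: gam_c_def algebra_simps)
  moreover have "integrable uniform01 (\<lambda>u. gam_c u * q u)"
    using integrable_mult_if_square_integrable[OF gam_c_meas assms(1) gam_c_sq_int assms(2)] .
  ultimately show ?thesis
    using uniform01.square_integrable_imp_integrable[OF assms(1,2)] assms(3) gam_int gam_mean by simp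
qed

lemma Hg_loss_le:
  fixes mu x :: "real^'n" and Sig :: "real^'n^'n" and GR :: "(real^'n) measure"
  assumes \<sigma>: "0 < sigma_x Sig x" and "0 \<le> \<epsilon>" and GR: "GR \<in> Mset mu Sig"
    and dist: "dWq (ref_quantile MF mu Sig x) (quantile (loss_cdf GR x)) \<le> sqrt \<epsilon>"
  shows "Hg g (loss_cdf GR x) \<le>
    - mu_x mu x + sqrt V * profile c0 (sigma_x Sig x) (optimal_cov c0 (sigma_x Sig x) \<epsilon>)"
proof -
  define \<sigma> m where "\<sigma> = sigma_x Sig x" and "m = x \<bullet> mu"
  define N where "N = distr GR borel (\<lambda>r. - (x \<bullet> r))"
  define Q where "Q = quantile (cdf N)"
  note moments = Mset_loss_moments[OF GR, of x, folded N_def]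
  have N: "real_distribution N" by (rule moments(1))
  have Q_moment: "(\<integral>u. h (Q u) \<partial>uniform01) = (\<integral>r. h (- (x \<bullet> r)) \<partial>GR)"
    and Q_integrable: "integrable uniform01 (\<lambda>u. h (Q u)) \<longleftrightarrow> integrable GR (\<lambda>r. h (- (x \<bullet> r)))"
    if "h \<in> borel_measurable borel" for h :: "real \<Rightarrow> real"
    using integral_quantile[OF N that] integrable_quantile_iff[OF N that]
      integral_distr[OF moments(2) that] integrable_distr_eq[OF moments(2) that]
    by (simp_all add: Q_def N_def)
  define q where "q u = Q u + m" for u
  have Q_meas: "Q \<in> borel_measurable uniform01"
    using borel_measurable_quantile[OF N] by (simp add: Q_def)
  then have q_meas: "q \<in> borel_measurable uniform01" by (simp add: q_def[abs_def])
  have Q_sq_int: "integrable uniform01 (\<lambda>u. (Q u)\<^sup>2)"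
    using Q_integrable[of "\<lambda>z. z\<^sup>2"] moments(3) by simp
  then have q_sq_int: "integrable uniform01 (\<lambda>u. (q u)\<^sup>2)"
    using uniform01.square_integrable_add_const[OF Q_meas] by (simp add: q_def)
  have q_sq: "(\<integral>u. (q u)\<^sup>2 \<partial>uniform01) = \<sigma>\<^sup>2"
    using Q_moment[of "\<lambda>z. (z + m)\<^sup>2"] moments(5) sigma_x_square[OF \<sigma>]
    by (simp add: q_def \<sigma>_def m_def)
  have q_mean: "integral\<^sup>L uniform01 q = 0"
  proof -
    have "integrable uniform01 Q"
      using uniform01.square_integrable_imp_integrable[OF Q_meas Q_sq_int] .
    then show ?thesis
      using Q_moment[of "\<lambda>z. z"] moments(4) by (simp add: q_def[abs_def] m_def)
  qed
  have "(\<integral>u. (q u - \<sigma> * f u)\<^sup>2 \<partial>uniform01) \<le> \<epsilon>"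
  proof -
    have "(\<lambda>u. (ref_quantile MF mu Sig x u - Q u)\<^sup>2) = (\<lambda>u. (q u - \<sigma> * f u)\<^sup>2)"
      by (simp add: ref_quantile_def q_def mu_x_def m_def \<sigma>_def power2_eq_square algebra_simps)
    then show ?thesis
      using dist \<open>0 \<le> \<epsilon>\<close> by (simp add: dWq_def set_integral_eq_uniform01 loss_cdf_def N_def[symmetric] Q_def)
  qed
  then have upper: "(\<integral>u. gam_c u * q u \<partial>uniform01) \<le> sqrt V * profile c0 \<sigma> (optimal_cov c0 \<sigma> \<epsilon>)"
    using \<sigma> \<open>0 \<le> \<epsilon>\<close> corr_f_gam
    by (intro integral_mult_le_profile[OF f_meas gam_c_meas f_sq_int gam_c_sq_int f_sq gam_c_sq
          _ _ _ q_meas q_sq_int q_sq]) (simp_all add: \<sigma>_def)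
  have "Hg g (loss_cdf GR x) = (\<integral>u. gam g u * (q u + - m) \<partial>uniform01)"
    by (simp add: Hg_def set_integral_eq_uniform01 loss_cdf_def N_def[symmetric] Q_def q_def)
  also have "\<dots> = (\<integral>u. gam_c u * q u \<partial>uniform01) + - m"
    by (rule integral_gam_mult_shift[OF q_meas q_sq_int q_mean])
  finally show ?thesis using upper by (simp add: mu_x_def m_def \<sigma>_def)
qed

lemma exists_Mset_Hg_loss_eq:
  fixes mu x :: "real^'n" and Sig :: "real^'n^'n"
  assumes sym: "transpose Sig = Sig" and psd: "\<forall>v. 0 \<le> v \<bullet> (Sig *v v)"
    and \<sigma>: "0 < sigma_x Sig x" and "0 \<le> \<epsilon>"
  obtains GR where "GR \<in> Mset mu Sig"
    "dWq (ref_quantile MF mu Sig x) (quantile (loss_cdf GR x)) \<le> sqrt \<epsilon>"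
    "Hg g (loss_cdf GR x) =
      - mu_x mu x + sqrt V * profile c0 (sigma_x Sig x) (optimal_cov c0 (sigma_x Sig x) \<epsilon>)"
proof -
  define \<sigma> m where "\<sigma> = sigma_x Sig x" and "m = x \<bullet> mu"
  have "0 < \<sigma>" using \<sigma> by (simp add: \<sigma>_def)
  obtain \<alpha> \<beta> where "0 \<le> \<alpha>" "0 \<le> \<beta>"
    and W_sq: "(\<integral>u. (\<alpha> * f u + \<beta> * gam_c u)\<^sup>2 \<partial>uniform01) = \<sigma>\<^sup>2"
    and W_dist: "(\<integral>u. (\<alpha> * f u + \<beta> * gam_c u - \<sigma> * f u)\<^sup>2 \<partial>uniform01) \<le> \<epsilon>"
    and W_gam: "(\<integral>u. gam_c u * (\<alpha> * f u + \<beta> * gam_c u) \<partial>uniform01) = sqrt V * profile c0 \<sigma> (optimal_cov c0 \<sigma> \<epsilon>)"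
    by (rule lincomb_attains_profile[OF f_meas gam_c_meas f_sq_int gam_c_sq_int f_sq gam_c_sq corr_f_gam(3,1,2)
          \<open>0 < \<sigma>\<close> \<open>0 \<le> \<epsilon>\<close>])
  define W where "W u = \<alpha> * f u + \<beta> * gam_c u" for u
  define Y where "Y u = W u + - m" for u
  have W_meas: "W \<in> borel_measurable uniform01"
    using f_meas gam_c_meas by (simp add: W_def[abs_def])
  have W_sq_int: "integrable uniform01 (\<lambda>u. (W u)\<^sup>2)"
    unfolding W_def by (rule square_integrable_lincomb[OF f_meas gam_c_meas f_sq_int gam_c_sq_int])
  have W_mean: "integral\<^sup>L uniform01 W = 0"
    using f_int f_mean gam_c_mean uniform01.square_integrable_imp_integrable[OF gam_c_meas gam_c_sq_int]
    by (simp add: W_def[abs_def])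
  have Y_meas: "Y \<in> borel_measurable uniform01" using W_meas by (simp add: Y_def[abs_def])
  have Y_mono: "mono_on {0<..<1} Y"
    using mono_onD[OF f_mono] mono_onD[OF mono_on_gam_c] \<open>0 \<le> \<alpha>\<close> \<open>0 \<le> \<beta>\<close>
    by (intro mono_onI) (simp add: Y_def W_def add_mono mult_left_mono)
  obtain GR where GR: "GR \<in> Mset mu Sig" and loss: "distr GR borel (\<lambda>r. - (x \<bullet> r)) = distr uniform01 borel Y"
  proof (rule Mset_with_loss_distribution[OF sym psd _ Y_meas])
    show "0 < x \<bullet> (Sig *v x)" using sigma_x_square[OF \<sigma>] \<sigma> by (metis zero_less_power)
    show "integrable uniform01 (\<lambda>u. (Y u)\<^sup>2)"
      using uniform01.square_integrable_add_const[OF W_meas W_sq_int, of "- m"] by (simp add: Y_def)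
    show "integral\<^sup>L uniform01 Y = - (x \<bullet> mu)"
      using W_mean uniform01.square_integrable_imp_integrable[OF W_meas W_sq_int]
      by (simp add: Y_def[abs_def] m_def)
    show "(\<integral>u. (Y u + x \<bullet> mu)\<^sup>2 \<partial>uniform01) = x \<bullet> (Sig *v x)"
      using W_sq sigma_x_square[OF \<sigma>] by (simp add: Y_def W_def m_def \<sigma>_def)
  qed
  have quantile_eq: "AE u in uniform01. quantile (loss_cdf GR x) u = Y u"
    using AE_quantile_distr_uniform01_eq[OF Y_mono] by (simp add: loss_cdf_def loss)
  have quantile_meas: "quantile (loss_cdf GR x) \<in> borel_measurable uniform01"
    using borel_measurable_quantile[OF uniform01.real_distribution_distr[OF Y_meas]] by (simp add: loss_cdf_def loss)
  show ?thesis
  proof (rule that[OF GR])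
    have "AE u in uniform01. (ref_quantile MF mu Sig x u - quantile (loss_cdf GR x) u)\<^sup>2 =
        (\<alpha> * f u + \<beta> * gam_c u - \<sigma> * f u)\<^sup>2"
      using quantile_eq by eventually_elim
        (simp add: ref_quantile_def Y_def W_def mu_x_def m_def \<sigma>_def power2_eq_square algebra_simps)
    then have "(\<integral>u. (ref_quantile MF mu Sig x u - quantile (loss_cdf GR x) u)\<^sup>2 \<partial>uniform01) =
        (\<integral>u. (\<alpha> * f u + \<beta> * gam_c u - \<sigma> * f u)\<^sup>2 \<partial>uniform01)"
      using quantile_meas f_meas gam_c_meas
      by (intro integral_cong_AE) (simp_all add: ref_quantile_def[abs_def])
    then show "dWq (ref_quantile MF mu Sig x) (quantile (loss_cdf GR x)) \<le> sqrt \<epsilon>"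
      using W_dist by (simp add: dWq_def set_integral_eq_uniform01)
    have "AE u in uniform01. gam g u * quantile (loss_cdf GR x) u = gam g u * (W u + - m)"
      using quantile_eq by eventually_elim (simp add: Y_def)
    then have "Hg g (loss_cdf GR x) = (\<integral>u. gam g u * (W u + - m) \<partial>uniform01)"
      unfolding Hg_def set_integral_eq_uniform01
      using quantile_meas borel_measurable_gam W_meas by (intro integral_cong_AE) simp_all
    also have "\<dots> = (\<integral>u. gam_c u * W u \<partial>uniform01) + - m"
      by (rule integral_gam_mult_shift[OF W_meas W_sq_int W_mean])
    finally show "Hg g (loss_cdf GR x) =
        - mu_x mu x + sqrt V * profile c0 (sigma_x Sig x) (optimal_cov c0 (sigma_x Sig x) \<epsilon>)"
      using W_gam by (simp add: W_def[symmetric] mu_x_def m_def \<sigma>_def)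
  qed
qed

lemma robust_risk_eq:
  fixes mu x :: "real^'n" and Sig :: "real^'n^'n"
  assumes "transpose Sig = Sig" "\<forall>v. 0 \<le> v \<bullet> (Sig *v v)" "0 < sigma_x Sig x" "0 \<le> \<epsilon>"
  shows "robust_risk g MF mu Sig \<epsilon> x =
    ereal (- mu_x mu x + sqrt V * profile c0 (sigma_x Sig x) (optimal_cov c0 (sigma_x Sig x) \<epsilon>))"
    (is "_ = ereal ?r")
  unfolding robust_risk_def
proof (rule antisym)
  show "(SUP GR\<in>{GR \<in> Mset mu Sig. dWq (ref_quantile MF mu Sig x) (quantile (loss_cdf GR x)) \<le> sqrt \<epsilon>}.
      ereal (Hg g (loss_cdf GR x))) \<le> ereal ?r"
    using Hg_loss_le assms(3,4) by (intro SUP_least) auto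
  obtain GR where "GR \<in> Mset mu Sig" "dWq (ref_quantile MF mu Sig x) (quantile (loss_cdf GR x)) \<le> sqrt \<epsilon>"
    "Hg g (loss_cdf GR x) = ?r"
    by (rule exists_Mset_Hg_loss_eq[OF assms])
  then show "ereal ?r \<le> (SUP GR\<in>{GR \<in> Mset mu Sig. dWq (ref_quantile MF mu Sig x) (quantile (loss_cdf GR x)) \<le> sqrt \<epsilon>}.
      ereal (Hg g (loss_cdf GR x)))"
    by (intro SUP_upper2[of GR]) auto
qed

end

theorem proposition4:
  fixes g :: "real \<Rightarrow> real" and MF :: "real measure"
    and mu :: "real^'n" and Sig :: "real^'n^'n"
    and P :: "(real^'n) set" and eps :: "real^'n \<Rightarrow> real"
  assumes g_dist: "distortion g" and g_conc: "concave_on {0..1} g"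
    and gA1: "A1 g" and gA2: "A2 g"
    and F_dist: "real_distribution MF"
    and F_sq: "integrable MF (\<lambda>z. z\<^sup>2)"
    and F_mean: "(\<integral>z. z \<partial>MF) = 0"
    and F_var: "(\<integral>z. z\<^sup>2 \<partial>MF) = 1"
    and Sig_sym: "transpose Sig = Sig"
    and Sig_psd: "\<forall>v. 0 \<le> v \<bullet> (Sig *v v)"
    and P_poly: "polyhedron P"
    and P_sig: "\<forall>x\<in>P. sigma_x Sig x > 0"
    and eps_pos: "\<forall>x\<in>P. eps x > 0"
  defines "V \<equiv> var01 (gam g)"
    and "c0 \<equiv> corr01 (quantile (cdf MF)) (gam g)"
  defines "eps_low \<equiv> (\<lambda>x. min (eps x) (2 * (sigma_x Sig x)\<^sup>2 * (1 - c0)))"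
  defines "rhs \<equiv> (\<lambda>x. - mu_x mu x
              + (sigma_x Sig x - eps_low x / (2 * sigma_x Sig x)) * sqrt V * c0
              + sqrt (eps_low x - (eps_low x)\<^sup>2 / (4 * (sigma_x Sig x)\<^sup>2)) * sqrt (V * (1 - c0\<^sup>2)))"
  shows "(\<forall>x\<in>P. robust_risk g MF mu Sig (eps x) x = ereal (rhs x)) \<and>
         {x\<in>P. \<forall>y\<in>P. robust_risk g MF mu Sig (eps x) x \<le> robust_risk g MF mu Sig (eps y) y}
           = {x\<in>P. \<forall>y\<in>P. rhs x \<le> rhs y}"
proof -
  interpret distortion_reference g MF
    unfolding distortion_reference_def distortion_reference_axioms_def concave_distortion_def
    using g_dist g_conc gA1 F_dist F_sq F_mean F_var by blast
  have "robust_risk g MF mu Sig (eps x) x = ereal (rhs x)" if "x \<in> P" for x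
  proof -
    have \<sigma>: "0 < sigma_x Sig x" and "0 \<le> eps x" using P_sig eps_pos that by auto
    have "rhs x = - mu_x mu x + sqrt V * profile c0 (sigma_x Sig x) (optimal_cov c0 (sigma_x Sig x) (eps x))"
      unfolding rhs_def eps_low_def add.assoc profile_optimal_cov_eq[OF \<sigma>] ..
    then show ?thesis
      using robust_risk_eq[OF Sig_sym Sig_psd \<sigma> \<open>0 \<le> eps x\<close>] by (simp add: V_def c0_def)
  qed
  then show ?thesis by auto
qed

end
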